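(* For every $t>0$ there is a constant $C(t)<\infty$, independent of $N$, such that $$\mathbb E\big(d(\eta^{\text{aux}}_{\kappa(t)},\rho_t)\big)\le C(t)\,N^{-1/4},$$ where the expectation is over the random update times.
   Context: Parameters: $b,c\ge0$, $0<s<1/c$, $\lambda\in[0,1/2]$, and a Lipschitz function $R:[0,1]\to[0,1]$. Write $\langle p\rangle_\nu=\int p\,d\nu$. Bounded Lipschitz distance: $d(\mu,\nu)=\sup\{|\int f\,d\mu-\int f\,d\nu|:\|f\|_L=1,f(0)=0\}$. Reproduction density: $$\Phi(\nu)=2\lambda\delta_{R(\langle p\rangle_\nu)}+(1-2\lambda)\frac{1+s(b\langle p\rangle_\nu-cp)}{1+s(b-c)\langle p\rangle_\nu}\nu(dp).$$ Average auxiliary density: $\eta^{\text{aux}}_0=\rho_0$ and $\eta^{\text{aux}}_{k+1}=\eta^{\text{aux}}_k-\frac1N\eta^{\text{aux}}_k+\frac1N\Phi(\eta^{\text{aux}}_k)$. Mean-field solution: $(\rho_t)_{t\ge0}$ solves the mean-field equation with initial datum $\rho_0$. Weakly, for every Lipschitz $g$, $$\frac{d}{dt}\int g\,d\rho_t=2\lambda\langle\phi\rangle_{\rho_t}\Big(g(R(\langle p\rangle_{\rho_t}))-\int g\,d\rho_t\Big)+(1-2\lambda)\int g(p)\,sc\big(\langle p\rangle_{\rho_t}-p\big)\,\rho_t(dp),$$ with $\langle\phi\rangle_{\rho_t}=1+s(b-c)\langle p\rangle_{\rho_t}$. Update times: $\Delta\tau_k$ are independent exponential random variables with means $\langle\Delta\tau_k\rangle=N^{-1}(1+s(b-c)\langle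 p\rangle_{\eta^{\text{aux}}_k})^{-1}$. Set $\tau_k=\sum_{l=1}^{k-1}\Delta\tau_l$ and $\langle\tau_k\rangle=\sum_{l=1}^{k-1}\langle\Delta\tau_l\rangle$. Let $M(t)$ be the largest natural number with $\langle\tau_{M(t)}\rangle\le t$, and $\kappa(t)$ the random largest number with $\tau_{\kappa(t)}\le t$. *)

theory Defs
  imports "HOL-Probability.Probability"
begin

definition S01 :: "real measure" where
  "S01 = restrict_space borel {0..1}"

definition is_density :: "real measure \<Rightarrow> bool" where
  "is_density \<nu> \<longleftrightarrow> prob_space \<nu> \<and> sets \<nu> = sets S01"

definition mean :: "real measure \<Rightarrow> real" where
  "mean \<nu> = (\<integral>p. p \<partial>\<nu>)"

definition lincomb :: "real \<Rightarrow> real measure \<Rightarrow> real \<Rightarrow> real measure \<Rightarrow> real measure" where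
  "lincomb a \<mu> b \<nu> = measure_of (space S01) (sets S01)
     (\<lambda>A. ennreal a * emeasure \<mu> A + ennreal b * emeasure \<nu> A)"

definition Phi :: "real \<Rightarrow> real \<Rightarrow> real \<Rightarrow> real \<Rightarrow> (real \<Rightarrow> real) \<Rightarrow> real measure \<Rightarrow> real measure" where
  "Phi b c s lam R \<nu> =
     lincomb (2 * lam) (return S01 (R (mean \<nu>)))
             (1 - 2 * lam)
             (density \<nu> (\<lambda>p. ennreal ((1 + s * (b * mean \<nu> - c * p)) / (1 + s * (b - c) * mean \<nu>))))"

fun eta_aux :: "real \<Rightarrow> real \<Rightarrow> real \<Rightarrow> real \<Rightarrow> (real \<Rightarrow> real) \<Rightarrow> nat \<Rightarrow> real measure \<Rightarrow> nat \<Rightarrow> real measure" where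
  "eta_aux b c s lam R N \<rho>0 0 = \<rho>0"
| "eta_aux b c s lam R N \<rho>0 (Suc k) =
     lincomb (1 - 1 / real N) (eta_aux b c s lam R N \<rho>0 k)
             (1 / real N) (Phi b c s lam R (eta_aux b c s lam R N \<rho>0 k))"

definition lip_norm :: "(real \<Rightarrow> real) \<Rightarrow> real" where
  "lip_norm f = (SUP xy \<in> {(x, y). x \<in> {0..1} \<and> y \<in> {0..1} \<and> x \<noteq> y}.
                   \<bar>f (fst xy) - f (snd xy)\<bar> / \<bar>fst xy - snd xy\<bar>)"

definition bl_dist :: "real measure \<Rightarrow> real measure \<Rightarrow> real" where
  "bl_dist \<mu> \<nu> = (SUP f \<in> {f. (\<exists>L. lipschitz_on L {0..1} f) \<and> lip_norm f = 1 \<and> f 0 = 0}.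
                     \<bar>(\<integral>p. f p \<partial>\<mu>) - (\<integral>p. f p \<partial>\<nu>)\<bar>)"

definition mean_field_solution ::
  "real \<Rightarrow> real \<Rightarrow> real \<Rightarrow> real \<Rightarrow> (real \<Rightarrow> real) \<Rightarrow> real measure \<Rightarrow> (real \<Rightarrow> real measure) \<Rightarrow> bool" where
  "mean_field_solution b c s lam R \<rho>0 \<rho> \<longleftrightarrow>
     \<rho> 0 = \<rho>0 \<and> (\<forall>t\<ge>0. is_density (\<rho> t)) \<and>
     (\<forall>g. (\<exists>L. lipschitz_on L {0..1} g) \<longrightarrow> (\<forall>t\<ge>0.
        ((\<lambda>u. \<integral>p. g p \<partial>\<rho> u) has_real_derivative
           (2 * lam * (1 + s * (b - c) * mean (\<rho> t)) * (g (R (mean (\<rho> t))) - (\<integral>p. g p \<partial>\<rho> t))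
            + (1 - 2 * lam) * (\<integral>p. g p * (s * c * (mean (\<rho> t) - p)) \<partial>\<rho> t)))
        (at t within {0..})))"

definition tau :: "(nat \<Rightarrow> 'a \<Rightarrow> real) \<Rightarrow> nat \<Rightarrow> 'a \<Rightarrow> real" where
  "tau dtau k \<omega> = (\<Sum>l\<in>{1..<k}. dtau l \<omega>)"

definition kappa :: "(nat \<Rightarrow> 'a \<Rightarrow> real) \<Rightarrow> real \<Rightarrow> 'a \<Rightarrow> nat" where
  "kappa dtau t \<omega> = (GREATEST k. tau dtau k \<omega> \<le> t)"

end

theory Submission
  imports Defs
begin

text \<open>Averaged over the noise, one update of the particle system acts on test integrals as an
  explicit Euler step of length \<open>h\<^sub>k = 1 / (N \<langle>\<phi>\<rangle>\<^bsub>\<eta>\<^sub>k\<^esub>)\<close> for the weak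
  mean-field equation. The drift is bounded and Lipschitz for the bounded Lipschitz distance, so
  the local error of a step is \<open>O(h\<^sub>k\<^sup>2)\<close>, and a discrete Gronwall argument keeps \<open>\<eta>\<^sub>k\<close>
  within \<open>O(1/N)\<close> of \<open>\<rho>\<close> at the accumulated time \<open>\<Sum>\<^sub>l\<^sub><\<^sub>k h\<^sub>l\<close>, for \<open>k = O(N)\<close>.

  The clock \<open>\<tau>\<^sub>k\<close> is a sum of independent exponentials with means \<open>h\<^sub>l\<close>. Take the window of
  indices whose mean times lie within \<open>\<epsilon> \<sim> N\<^sup>-\<^sup>1\<^sup>/\<^sup>4\<close> of \<open>t\<close>. By Chebyshev, except on an
  event of probability \<open>O(1/(N \<epsilon>\<^sup>2)) = O(N\<^sup>-\<^sup>1\<^sup>/\<^sup>4)\<close> the clock at both ends of the window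
  is within \<open>\<epsilon>\<close> of its mean, so \<open>\<kappa>(t)\<close> falls in the window and the distance is
  \<open>O(N\<^sup>-\<^sup>1\<^sup>/\<^sup>4)\<close>; on the exceptional event the distance is at most 2.\<close>

section \<open>Mixtures of measures on the unit interval\<close>

lemma space_S01 [simp]: "space S01 = {0..1}"
  by (simp add: S01_def space_restrict_space)

lemma measurable_S01_cong: "sets M = sets S01 \<Longrightarrow> f \<in> measurable S01 N \<Longrightarrow> f \<in> measurable M N"
  using measurable_cong_sets[of M S01 N N] by simp

lemma continuous_on_measurable_S01: "continuous_on {0..1} f \<Longrightarrow> f \<in> borel_measurable S01"
  by (simp add: S01_def borel_measurable_continuous_on_restrict)

lemma sets_lincomb [simp]: "sets (lincomb a \<mu> b \<nu>) = sets S01"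
  unfolding lincomb_def by (rule sets.sets_measure_of_eq)

lemma space_lincomb [simp]: "space (lincomb a \<mu> b \<nu>) = {0..1}"
  unfolding lincomb_def by (metis sets.space_measure_of_eq space_S01)

lemma emeasure_lincomb:
  assumes "sets \<mu> = sets S01" "sets \<nu> = sets S01" "A \<in> sets S01"
  shows "emeasure (lincomb a \<mu> b \<nu>) A = ennreal a * emeasure \<mu> A + ennreal b * emeasure \<nu> A"
  unfolding lincomb_def
proof (rule emeasure_measure_of_sigma)
  show "sigma_algebra (space S01) (sets S01)" by (rule sets.sigma_algebra_axioms)
  show "positive (sets S01) (\<lambda>A. ennreal a * emeasure \<mu> A + ennreal b * emeasure \<nu> A)"
    by (simp add: positive_def)
  show "countably_additive (sets S01) (\<lambda>A. ennreal a * emeasure \<mu> A + ennreal b * emeasure \<nu> A)"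
  proof (rule countably_additiveI)
    fix F :: "nat \<Rightarrow> _" assume F: "range F \<subseteq> sets S01" "disjoint_family F"
    have "(\<Sum>i. ennreal a * emeasure \<mu> (F i) + ennreal b * emeasure \<nu> (F i))
        = ennreal a * (\<Sum>i. emeasure \<mu> (F i)) + ennreal b * (\<Sum>i. emeasure \<nu> (F i))"
      by (simp add: suminf_add[symmetric])
    also have "\<dots> = ennreal a * emeasure \<mu> (\<Union>i. F i) + ennreal b * emeasure \<nu> (\<Union>i. F i)"
      using F assms by (simp add: suminf_emeasure)
    finally show "(\<Sum>i. ennreal a * emeasure \<mu> (F i) + ennreal b * emeasure \<nu> (F i))
        = ennreal a * emeasure \<mu> (\<Union>i. F i) + ennreal b * emeasure \<nu> (\<Union>i. F i)" .
  qed
qed (fact assms)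

lemma nn_integral_lincomb:
  assumes \<mu>: "sets \<mu> = sets S01" and \<nu>: "sets \<nu> = sets S01" and f: "f \<in> borel_measurable S01"
  shows "nn_integral (lincomb a \<mu> b \<nu>) f = ennreal a * nn_integral \<mu> f + ennreal b * nn_integral \<nu> f"
  using f
proof induction
  case (cong f g)
  have "space \<mu> = {0..1}" "space \<nu> = {0..1}"
    using sets_eq_imp_space_eq[OF \<mu>] sets_eq_imp_space_eq[OF \<nu>] by auto
  with cong show ?case
    by (metis (no_types, lifting) nn_integral_cong space_S01 space_lincomb)
next
  case (set A)
  then show ?case using assms by (simp add: emeasure_lincomb)
next
  case (mult f c)
  have "f \<in> borel_measurable \<mu>" "f \<in> borel_measurable \<nu>" "f \<in> borel_measurable (lincomb a \<mu> b \<nu>)"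
    using mult(2) assms by (auto intro: measurable_S01_cong)
  with mult(4) show ?case
    by (simp add: nn_integral_cmult distrib_left mult.left_commute)
next
  case (add f g)
  have "f \<in> borel_measurable \<mu>" "f \<in> borel_measurable \<nu>" "f \<in> borel_measurable (lincomb a \<mu> b \<nu>)"
       "g \<in> borel_measurable \<mu>" "g \<in> borel_measurable \<nu>" "g \<in> borel_measurable (lincomb a \<mu> b \<nu>)"
    using add assms by (auto intro: measurable_S01_cong)
  with add show ?case
    by (simp add: nn_integral_add distrib_left algebra_simps)
next
  case (seq U)
  have m: "\<And>i. U i \<in> borel_measurable \<mu>" "\<And>i. U i \<in> borel_measurable \<nu>"
    "\<And>i. U i \<in> borel_measurable (lincomb a \<mu> b \<nu>)"
    using seq(1) assms by (auto intro: measurable_S01_cong)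
  have inc: "incseq U" using seq by simp
  have mono: "incseq (\<lambda>i. c * nn_integral M (U i))" for c M
    using inc by (intro incseq_SucI mult_left_mono nn_integral_mono)
      (auto simp: incseq_Suc_iff le_fun_def)
  have sup: "Sup (range U) = (\<lambda>x. SUP i. U i x)"
    by (rule ext) (simp add: SUP_apply[symmetric])
  have "nn_integral (lincomb a \<mu> b \<nu>) (Sup (range U)) = (SUP i. nn_integral (lincomb a \<mu> b \<nu>) (U i))"
    unfolding sup by (rule nn_integral_monotone_convergence_SUP[OF inc m(3)])
  also have "\<dots> = (SUP i. ennreal a * nn_integral \<mu> (U i) + ennreal b * nn_integral \<nu> (U i))"
    using seq by simp
  also have "\<dots> = (SUP i. ennreal a * nn_integral \<mu> (U i)) + (SUP i. ennreal b * nn_integral \<nu> (U i))"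
    by (rule ennreal_SUP_add) (use mono in auto)
  also have "\<dots> = ennreal a * nn_integral \<mu> (Sup (range U)) + ennreal b * nn_integral \<nu> (Sup (range U))"
    unfolding sup nn_integral_monotone_convergence_SUP[OF inc m(1)]
      nn_integral_monotone_convergence_SUP[OF inc m(2)]
    by (simp add: SUP_mult_left_ennreal)
  finally show ?case .
qed

lemma integral_lincomb_nonneg:
  assumes \<mu>: "sets \<mu> = sets S01" "finite_measure \<mu>" and \<nu>: "sets \<nu> = sets S01" "finite_measure \<nu>"
    and ab: "0 \<le> a" "0 \<le> b" and h: "h \<in> borel_measurable S01"
    and hB: "\<And>x. x \<in> {0..1} \<Longrightarrow> 0 \<le> h x \<and> h x \<le> B"
  shows "(\<integral>x. h x \<partial>lincomb a \<mu> b \<nu>) = a * (\<integral>x. h x \<partial>\<mu>) + b * (\<integral>x. h x \<partial>\<nu>)"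
proof -
  have nn: "nn_integral M h = ennreal (\<integral>x. h x \<partial>M)" "0 \<le> (\<integral>x. h x \<partial>M)"
    if M: "sets M = sets S01" "finite_measure M" for M
  proof -
    have sM: "space M = {0..1}" using sets_eq_imp_space_eq[OF M(1)] by simp
    have hM: "h \<in> borel_measurable M" by (rule measurable_S01_cong[OF M(1) h])
    have "integrable M h"
      using M(2) hM hB sM by (auto intro!: finite_measure.integrable_const_bound[where B=B] AE_I2)
    then show "nn_integral M h = ennreal (\<integral>x. h x \<partial>M)"
      using hB sM by (intro nn_integral_eq_integral) auto
    show "0 \<le> (\<integral>x. h x \<partial>M)" using hB sM by (auto intro!: integral_nonneg_AE AE_I2)
  qed
  have "(\<integral>x. h x \<partial>lincomb a \<mu> b \<nu>) = enn2real (\<integral>\<^sup>+x. ennreal (h x) \<partial>lincomb a \<mu> b \<nu>)"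
    using h hB by (intro integral_eq_nn_integral) (auto intro: measurable_S01_cong)
  also have "(\<integral>\<^sup>+x. ennreal (h x) \<partial>lincomb a \<mu> b \<nu>) = ennreal a * nn_integral \<mu> h + ennreal b * nn_integral \<nu> h"
    using nn_integral_lincomb[OF \<mu>(1) \<nu>(1), of "\<lambda>x. ennreal (h x)"] h by simp
  also have "\<dots> = ennreal (a * (\<integral>x. h x \<partial>\<mu>) + b * (\<integral>x. h x \<partial>\<nu>))"
    using nn[OF \<mu>] nn[OF \<nu>] ab by (simp add: ennreal_mult ennreal_plus)
  finally show ?thesis
    using nn[OF \<mu>] nn[OF \<nu>] ab by (simp add: ennreal_plus[symmetric] del: ennreal_plus)
qed

lemma integral_lincomb:
  assumes \<mu>: "sets \<mu> = sets S01" "finite_measure \<mu>" and \<nu>: "sets \<nu> = sets S01" "finite_measure \<nu>"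
    and ab: "0 \<le> a" "0 \<le> b" and f: "f \<in> borel_measurable S01"
    and fB: "\<And>x. x \<in> {0..1} \<Longrightarrow> \<bar>f x\<bar> \<le> B"
  shows "(\<integral>x. f x \<partial>lincomb a \<mu> b \<nu>) = a * (\<integral>x. f x \<partial>\<mu>) + b * (\<integral>x. f x \<partial>\<nu>)"
proof -
  define fp where "fp x = max (f x) 0" for x
  define fn where "fn x = max (- f x) 0" for x
  have f_eq: "f = (\<lambda>x. fp x - fn x)" unfolding fp_def fn_def by auto
  have mp: "fp \<in> borel_measurable S01" "fn \<in> borel_measurable S01"
    unfolding fp_def fn_def using f by measurable
  have bp: "\<And>x. x \<in> {0..1} \<Longrightarrow> 0 \<le> fp x \<and> fp x \<le> B" "\<And>x. x \<in> {0..1} \<Longrightarrow> 0 \<le> fn x \<and> fn x \<le> B"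
    using fB unfolding fp_def fn_def by (force simp: abs_le_iff)+
  have intg: "integrable M fp" "integrable M fn" if M: "sets M = sets S01" "finite_measure M" for M
    using M mp bp sets_eq_imp_space_eq[OF M(1)]
    by (auto intro!: finite_measure.integrable_const_bound[where B=B] AE_I2 intro: measurable_S01_cong)
  have "finite_measure (lincomb a \<mu> b \<nu>)"
  proof (rule finite_measureI)
    have "{0..1} \<in> sets S01" by (metis sets.top space_S01)
    then have "emeasure (lincomb a \<mu> b \<nu>) (space (lincomb a \<mu> b \<nu>))
        = ennreal a * emeasure \<mu> {0..1} + ennreal b * emeasure \<nu> {0..1}"
      using emeasure_lincomb[OF \<mu>(1) \<nu>(1)] by simp
    also have "\<dots> \<noteq> \<infinity>"
      using \<mu> \<nu> sets_eq_imp_space_eq[OF \<mu>(1)] sets_eq_imp_space_eq[OF \<nu>(1)]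
      by (simp add: ennreal_mult_eq_top_iff finite_measure.emeasure_finite)
    finally show "emeasure (lincomb a \<mu> b \<nu>) (space (lincomb a \<mu> b \<nu>)) \<noteq> \<infinity>" .
  qed
  with intg[of "lincomb a \<mu> b \<nu>"] intg[OF \<mu>] intg[OF \<nu>] show ?thesis
    unfolding f_eq
    using integral_lincomb_nonneg[OF \<mu> \<nu> ab mp(1) bp(1)] integral_lincomb_nonneg[OF \<mu> \<nu> ab mp(2) bp(2)]
    by (simp add: algebra_simps)
qed

lemma is_density_space: "is_density \<nu> \<Longrightarrow> space \<nu> = {0..1}"
  unfolding is_density_def by (metis space_S01 sets_eq_imp_space_eq)

lemma is_density_integrable:
  assumes \<nu>: "is_density \<nu>" and g: "g \<in> borel_measurable S01"
    and gB: "\<And>x. x \<in> {0..1} \<Longrightarrow> \<bar>g x\<bar> \<le> (B::real)"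
  shows "integrable \<nu> g"
proof -
  interpret prob_space \<nu> using \<nu> by (simp add: is_density_def)
  show ?thesis
    using assms is_density_space[OF \<nu>]
    by (intro integrable_const_bound[where B=B] AE_I2)
      (auto intro: measurable_S01_cong simp: is_density_def)
qed

lemma abs_integral_le_bound:
  assumes \<nu>: "is_density \<nu>" and gB: "\<And>x. x \<in> {0..1} \<Longrightarrow> \<bar>g x\<bar> \<le> (B::real)"
  shows "\<bar>\<integral>p. g p \<partial>\<nu>\<bar> \<le> B"
proof -
  interpret prob_space \<nu> using \<nu> by (simp add: is_density_def)
  have "0 \<le> B" using gB[of 0] by simp
  have "\<bar>\<integral>p. g p \<partial>\<nu>\<bar> \<le> (\<integral>p. \<bar>g p\<bar> \<partial>\<nu>)" by (rule integral_abs_bound)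
  also have "\<dots> \<le> (\<integral>p. B \<partial>\<nu>)"
    using gB \<open>0 \<le> B\<close> is_density_space[OF \<nu>] by (intro integral_mono_AE' AE_I2) auto
  finally show ?thesis by (simp add: prob_space)
qed

lemma integral_const_density: "is_density \<mu> \<Longrightarrow> (\<integral>p. a \<partial>\<mu>) = (a::real)"
  by (simp add: is_density_def prob_space.prob_space)

lemma mean_bounds:
  assumes "is_density \<nu>" shows "0 \<le> mean \<nu>" "mean \<nu> \<le> 1"
proof -
  interpret prob_space \<nu> using assms by (simp add: is_density_def)
  have sp: "space \<nu> = {0..1}" using is_density_space[OF assms] .
  show "0 \<le> mean \<nu>" unfolding mean_def using sp by (intro integral_nonneg_AE AE_I2) auto
  have "mean \<nu> \<le> (\<integral>p. 1 \<partial>\<nu>)" unfolding mean_def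
    using sp assms by (intro integral_mono_AE' AE_I2) auto
  then show "mean \<nu> \<le> 1" by (simp add: prob_space)
qed

lemma is_density_lincomb:
  assumes "is_density \<mu>" "is_density \<nu>" "0 \<le> a" "0 \<le> b" "a + b = 1"
  shows "is_density (lincomb a \<mu> b \<nu>)"
proof -
  have "{0..1} \<in> sets S01" by (metis sets.top space_S01)
  then have "emeasure (lincomb a \<mu> b \<nu>) {0..1} = ennreal a * emeasure \<mu> {0..1} + ennreal b * emeasure \<nu> {0..1}"
    using assms by (intro emeasure_lincomb) (auto simp: is_density_def)
  also have "\<dots> = ennreal (a + b)"
  proof -
    have "emeasure M {0..1} = 1" if "is_density M" for M
      using that is_density_space[OF that] unfolding is_density_def
      by (metis prob_space.emeasure_space_1)
    then show ?thesis using assms by (simp add: ennreal_plus[symmetric] del: ennreal_plus)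
  qed
  finally show ?thesis unfolding is_density_def
    using assms(5) by (intro conjI prob_spaceI) auto
qed

section \<open>The bounded Lipschitz distance\<close>

definition lip_pairs :: "(real \<times> real) set" where
  "lip_pairs = {(x, y). x \<in> {0..1} \<and> y \<in> {0..1} \<and> x \<noteq> y}"

definition lip_ratio :: "(real \<Rightarrow> real) \<Rightarrow> real \<times> real \<Rightarrow> real" where
  "lip_ratio f xy = \<bar>f (fst xy) - f (snd xy)\<bar> / \<bar>fst xy - snd xy\<bar>"

lemma lip_norm_eq_SUP: "lip_norm f = (SUP xy \<in> lip_pairs. lip_ratio f xy)"
  unfolding lip_norm_def lip_pairs_def lip_ratio_def ..

lemma zero_one_lip_pairs: "(0, 1) \<in> lip_pairs"
  by (simp add: lip_pairs_def)

lemma lip_pairs_nonempty: "lip_pairs \<noteq> {}"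
  using zero_one_lip_pairs by blast

lemma lipschitz_on_abs_diff:
  assumes "lipschitz_on L {0..1} f" "x \<in> {0..1}" "y \<in> {0..1}"
  shows "\<bar>f x - f y\<bar> \<le> L * \<bar>x - y\<bar>"
  using lipschitz_onD[OF assms] by (simp add: dist_real_def)

lemma lip_ratio_le:
  "lipschitz_on L {0..1} f \<Longrightarrow> xy \<in> lip_pairs \<Longrightarrow> lip_ratio f xy \<le> L"
  unfolding lip_pairs_def lip_ratio_def by (auto simp: divide_le_eq dest: lipschitz_on_abs_diff)

lemma bdd_above_lip_ratio: "lipschitz_on L {0..1} f \<Longrightarrow> bdd_above (lip_ratio f ` lip_pairs)"
  by (rule bdd_aboveI2) (rule lip_ratio_le)

lemma lip_norm_le: "lipschitz_on L {0..1} f \<Longrightarrow> lip_norm f \<le> L"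
  unfolding lip_norm_eq_SUP by (rule cSUP_least[OF lip_pairs_nonempty lip_ratio_le])

lemma lip_norm_nonneg: "lipschitz_on L {0..1} f \<Longrightarrow> 0 \<le> lip_norm f"
proof -
  assume f: "lipschitz_on L {0..1} f"
  have "lip_ratio f (0, 1) \<le> lip_norm f"
    unfolding lip_norm_eq_SUP by (rule cSUP_upper[OF zero_one_lip_pairs bdd_above_lip_ratio[OF f]])
  moreover have "0 \<le> lip_ratio f (0, 1)" by (simp add: lip_ratio_def)
  ultimately show ?thesis by linarith
qed

lemma abs_diff_le_lip_norm:
  assumes f: "lipschitz_on L {0..1} f" and xy: "x \<in> {0..1}" "y \<in> {0..1}"
  shows "\<bar>f x - f y\<bar> \<le> lip_norm f * \<bar>x - y\<bar>"
proof (cases "x = y")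
  case False
  then have "(x, y) \<in> lip_pairs" using xy by (simp add: lip_pairs_def)
  then have "lip_ratio f (x, y) \<le> lip_norm f"
    unfolding lip_norm_eq_SUP by (rule cSUP_upper[OF _ bdd_above_lip_ratio[OF f]])
  then show ?thesis using False by (simp add: lip_ratio_def divide_le_eq)
qed simp

lemma lip_norm_affine:
  assumes f: "lipschitz_on L {0..1} f" and l: "0 < l"
  shows "lip_norm (\<lambda>x. (f x - d) / l) = lip_norm f / l"
proof -
  have "lip_ratio (\<lambda>x. (f x - d) / l) = (\<lambda>xy. lip_ratio f xy / l)"
    using l by (auto simp: lip_ratio_def fun_eq_iff diff_divide_distrib[symmetric])
  then have "lip_norm (\<lambda>x. (f x - d) / l) = Sup ((\<lambda>y. y / l) ` (lip_ratio f ` lip_pairs))"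
    unfolding lip_norm_eq_SUP by (simp add: image_comp)
  also have "\<dots> = Sup (lip_ratio f ` lip_pairs) / l"
    using l lip_pairs_nonempty bdd_above_lip_ratio[OF f]
    by (intro continuous_at_Sup_mono[symmetric])
      (auto intro!: monoI divide_right_mono continuous_intros)
  finally show ?thesis unfolding lip_norm_eq_SUP .
qed

definition bl_tests :: "(real \<Rightarrow> real) set" where
  "bl_tests = {f. (\<exists>L. lipschitz_on L {0..1} f) \<and> lip_norm f = 1 \<and> f 0 = 0}"

definition bl_close :: "real measure \<Rightarrow> real measure \<Rightarrow> real \<Rightarrow> bool" where
  "bl_close \<mu> \<nu> E \<longleftrightarrow> (\<forall>f\<in>bl_tests. \<bar>(\<integral>p. f p \<partial>\<mu>) - (\<integral>p. f p \<partial>\<nu>)\<bar> \<le> E)"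

lemma bl_test_lipschitz:
  assumes "f \<in> bl_tests" "x \<in> {0..1}" "y \<in> {0..1}"
  shows "\<bar>f x - f y\<bar> \<le> \<bar>x - y\<bar>"
  using assms abs_diff_le_lip_norm[of _ f x y] by (auto simp: bl_tests_def)

lemma bl_test_bound: "f \<in> bl_tests \<Longrightarrow> x \<in> {0..1} \<Longrightarrow> \<bar>f x\<bar> \<le> 1"
  using bl_test_lipschitz[of f x 0] by (auto simp: bl_tests_def)

lemma bl_test_measurable: "f \<in> bl_tests \<Longrightarrow> f \<in> borel_measurable S01"
  unfolding bl_tests_def
  by (auto intro!: continuous_on_measurable_S01 intro: lipschitz_on_continuous_on)

lemma id_bl_test: "(\<lambda>x. x) \<in> bl_tests"
proof -
  have "lip_norm (\<lambda>x::real. x) = (SUP xy \<in> lip_pairs. 1)"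
    unfolding lip_norm_eq_SUP by (rule SUP_cong) (auto simp: lip_pairs_def lip_ratio_def)
  then show ?thesis
    using lip_pairs_nonempty unfolding bl_tests_def
    by (auto intro!: exI[of _ 1] lipschitz_onI simp: dist_real_def)
qed

lemma bl_dist_le: "bl_close \<mu> \<nu> E \<Longrightarrow> bl_dist \<mu> \<nu> \<le> E"
  unfolding bl_dist_def bl_close_def bl_tests_def[symmetric]
  using id_bl_test by (intro cSUP_least) auto

lemma bl_dist_le_2: "is_density \<mu> \<Longrightarrow> is_density \<nu> \<Longrightarrow> bl_dist \<mu> \<nu> \<le> 2"
  by (rule bl_dist_le)
    (auto simp: bl_close_def dest!: abs_integral_le_bound[OF _ bl_test_bound] intro: abs_triangle_ineq4[THEN order_trans])

lemma bl_close_nonneg: "bl_close \<mu> \<nu> E \<Longrightarrow> 0 \<le> E"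
  using id_bl_test unfolding bl_close_def by (meson abs_ge_zero order_trans)

lemma bl_close_trans: "bl_close \<mu> \<nu> E1 \<Longrightarrow> bl_close \<nu> \<rho> E2 \<Longrightarrow> bl_close \<mu> \<rho> (E1 + E2)"
  unfolding bl_close_def by (smt (verit, best))

lemma bl_close_mono: "bl_close \<mu> \<nu> E1 \<Longrightarrow> E1 \<le> E2 \<Longrightarrow> bl_close \<mu> \<nu> E2"
  unfolding bl_close_def by force

lemma bl_close_mean: "bl_close \<mu> \<nu> E \<Longrightarrow> \<bar>mean \<mu> - mean \<nu>\<bar> \<le> E"
  using id_bl_test unfolding bl_close_def mean_def by blast

lemma normalized_in_bl_tests:
  assumes g: "lipschitz_on K {0..1} g" and l: "0 < lip_norm g"
  shows "(\<lambda>x. (g x - g 0) / lip_norm g) \<in> bl_tests"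
proof -
  have "lipschitz_on (K / lip_norm g) {0..1} (\<lambda>x. (g x - g 0) / lip_norm g)"
  proof (rule lipschitz_onI)
    fix x y :: real assume "x \<in> {0..1}" "y \<in> {0..1}"
    then have "\<bar>g x - g y\<bar> / lip_norm g \<le> K * \<bar>x - y\<bar> / lip_norm g"
      using lipschitz_on_abs_diff[OF g] l by (simp add: divide_right_mono)
    then show "dist ((g x - g 0) / lip_norm g) ((g y - g 0) / lip_norm g) \<le> K / lip_norm g * dist x y"
      using l by (simp add: dist_real_def diff_divide_distrib[symmetric])
  qed (use lipschitz_on_nonneg[OF g] l in simp)
  then show ?thesis
    unfolding bl_tests_def using lip_norm_affine[OF g l, of "g 0"] l by auto
qed

text \<open>A \<open>K\<close>-Lipschitz \<open>g\<close> is \<open>g 0\<close> plus \<open>lip_norm g\<close> times a test function, unless it is constant.\<close>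
lemma bl_close_lipschitz_integral:
  assumes \<mu>: "is_density \<mu>" and \<nu>: "is_density \<nu>" and E: "bl_close \<mu> \<nu> E"
    and g: "lipschitz_on K {0..1} g"
  shows "\<bar>(\<integral>p. g p \<partial>\<mu>) - (\<integral>p. g p \<partial>\<nu>)\<bar> \<le> K * E"
proof -
  define l where "l = lip_norm g"
  have lK: "l \<le> K" unfolding l_def by (rule lip_norm_le[OF g])
  have E0: "0 \<le> E" by (rule bl_close_nonneg[OF E])
  show ?thesis
  proof (cases "l = 0")
    case True
    have "g x = g 0" if "x \<in> {0..1}" for x
      using abs_diff_le_lip_norm[OF g that, of 0] True by (simp add: l_def)
    then have "(\<integral>p. g p \<partial>M) = g 0" if M: "is_density M" for M
      using integral_const_density[OF M, of "g 0"] is_density_space[OF M]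
      by (metis Bochner_Integration.integral_cong)
    then show ?thesis using \<mu> \<nu> E0 lK True by simp
  next
    case False
    then have l_pos: "0 < l" using lip_norm_nonneg[OF g] by (simp add: l_def)
    define f where "f = (\<lambda>x. (g x - g 0) / l)"
    have f_test: "f \<in> bl_tests"
      unfolding f_def l_def using normalized_in_bl_tests[OF g] l_pos by (simp add: l_def)
    have "(\<integral>p. g p \<partial>M) = l * (\<integral>p. f p \<partial>M) + g 0" if M: "is_density M" for M
    proof -
      have "integrable M f"
        by (rule is_density_integrable[OF M bl_test_measurable[OF f_test] bl_test_bound[OF f_test]])
      moreover have "(\<integral>p. g p \<partial>M) = (\<integral>p. l * f p + g 0 \<partial>M)" using l_pos by (simp add: f_def)
      ultimately show ?thesis using integral_const_density[OF M] M
        by (simp add: is_density_def prob_space_def finite_measure.integrable_const)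
    qed
    then have "\<bar>(\<integral>p. g p \<partial>\<mu>) - (\<integral>p. g p \<partial>\<nu>)\<bar> = l * \<bar>(\<integral>p. f p \<partial>\<mu>) - (\<integral>p. f p \<partial>\<nu>)\<bar>"
      using \<mu> \<nu> l_pos by (simp add: right_diff_distrib[symmetric] abs_mult)
    also have "\<dots> \<le> l * E" using E f_test l_pos unfolding bl_close_def by (simp add: mult_left_mono)
    also have "\<dots> \<le> K * E" using lK E0 by (simp add: mult_right_mono)
    finally show ?thesis .
  qed
qed

lemma abs_mult_le_mult: "\<bar>x\<bar> \<le> a \<Longrightarrow> \<bar>y\<bar> \<le> b \<Longrightarrow> \<bar>(x::real) * y\<bar> \<le> a * b"
  by (simp add: abs_mult mult_mono')

lemma bl_test_mult_id_bound: "f \<in> bl_tests \<Longrightarrow> x \<in> {0..1} \<Longrightarrow> \<bar>x * f x\<bar> \<le> 1"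
  using abs_mult_le_mult[of x 1 "f x" 1] bl_test_bound[of f x] by auto

lemma lipschitz_mult_id_bl_test:
  assumes f: "f \<in> bl_tests" shows "lipschitz_on 2 {0..1} (\<lambda>x. x * f x)"
proof (rule lipschitz_onI)
  fix x y :: real assume xy: "x \<in> {0..1}" "y \<in> {0..1}"
  have "x * f x - y * f y = x * (f x - f y) + f y * (x - y)" by (simp add: algebra_simps)
  moreover have "\<bar>x * (f x - f y)\<bar> \<le> 1 * \<bar>x - y\<bar>"
    using xy bl_test_lipschitz[OF f xy] by (intro abs_mult_le_mult) auto
  moreover have "\<bar>f y * (x - y)\<bar> \<le> 1 * \<bar>x - y\<bar>"
    using xy bl_test_bound[OF f] by (intro abs_mult_le_mult) auto
  ultimately have "\<bar>x * f x - y * f y\<bar> \<le> 2 * \<bar>x - y\<bar>" by (smt (verit) abs_triangle_ineq)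
  then show "dist (x * f x) (y * f y) \<le> 2 * dist x y" by (simp add: dist_real_def)
qed simp

lemma drift_diff_arith:
  fixes A \<sigma> D P LF E p1 p2 m1 m2 I1 I2 J1 J2 F1 F2 :: real
  assumes A: "0 \<le> A" "A \<le> 1" and \<sigma>: "0 \<le> \<sigma>"
    and p: "\<bar>p1 - p2\<bar> \<le> D * E" "\<bar>p2\<bar> \<le> P"
    and m: "\<bar>m1 - m2\<bar> \<le> E" "0 \<le> m2" "m2 \<le> 1"
    and I: "\<bar>I1 - I2\<bar> \<le> E" "\<bar>I1\<bar> \<le> 1" and J: "\<bar>J1 - J2\<bar> \<le> 2 * E"
    and F: "\<bar>F1 - F2\<bar> \<le> LF * E" "\<bar>F1\<bar> \<le> 1"
  shows "\<bar>(A * p1 * (F1 - I1) + (1 - A) * \<sigma> * (m1 * I1 - J1))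
        - (A * p2 * (F2 - I2) + (1 - A) * \<sigma> * (m2 * I2 - J2))\<bar>
       \<le> (2 * D + P * (LF + 1) + 4 * \<sigma>) * E"
proof -
  have T1: "\<bar>p1 * (F1 - I1) - p2 * (F2 - I2)\<bar> \<le> 2 * D * E + P * (LF + 1) * E"
  proof -
    have "\<bar>(p1 - p2) * (F1 - I1)\<bar> \<le> D * E * 2"
      using F(2) I(2) by (intro abs_mult_le_mult[OF p(1)]) linarith
    moreover have "\<bar>p2 * ((F1 - F2) - (I1 - I2))\<bar> \<le> P * (LF * E + E)"
      using F(1) I(1) by (intro abs_mult_le_mult[OF p(2)]) linarith
    moreover have "p1 * (F1 - I1) - p2 * (F2 - I2) = (p1 - p2) * (F1 - I1) + p2 * ((F1 - F2) - (I1 - I2))"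
      by (simp add: algebra_simps)
    ultimately show ?thesis by (simp add: algebra_simps)
  qed
  have T2: "\<bar>(m1 * I1 - J1) - (m2 * I2 - J2)\<bar> \<le> 4 * E"
  proof -
    have "\<bar>(m1 - m2) * I1\<bar> \<le> E * 1" by (rule abs_mult_le_mult[OF m(1) I(2)])
    moreover have "\<bar>m2 * (I1 - I2)\<bar> \<le> 1 * E" using m I by (intro abs_mult_le_mult) auto
    moreover have "(m1 * I1 - J1) - (m2 * I2 - J2) = (m1 - m2) * I1 + m2 * (I1 - I2) - (J1 - J2)"
      by (simp add: algebra_simps)
    ultimately show ?thesis using J by linarith
  qed
  have "\<bar>A * (p1 * (F1 - I1) - p2 * (F2 - I2))\<bar> \<le> 1 * (2 * D * E + P * (LF + 1) * E)"
    using A by (intro abs_mult_le_mult[OF _ T1]) auto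
  moreover have "\<bar>((1 - A) * \<sigma>) * ((m1 * I1 - J1) - (m2 * I2 - J2))\<bar> \<le> \<sigma> * (4 * E)"
    using A \<sigma> by (intro abs_mult_le_mult[OF _ T2]) (auto simp: abs_mult intro: mult_left_le_one_le)
  ultimately show ?thesis by (simp add: algebra_simps)
qed

section \<open>The reproduction step\<close>

locale reproduction =
  fixes b c s lam :: real and R :: "real \<Rightarrow> real"
  assumes b_nonneg: "0 \<le> b" and c_nonneg: "0 \<le> c" and s_pos: "0 < s" and sc_less_1: "s * c < 1"
    and lam_nonneg: "0 \<le> lam" and lam_le_half: "lam \<le> 1/2"
    and R_range: "\<forall>x\<in>{0..1}. R x \<in> {0..1}"
begin

definition phi :: "real measure \<Rightarrow> real" where
  "phi \<nu> = 1 + s * (b - c) * mean \<nu>"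

definition selection_density :: "real measure \<Rightarrow> real \<Rightarrow> real" where
  "selection_density \<nu> p = (1 + s * (b * mean \<nu> - c * p)) / phi \<nu>"

definition drift :: "(real \<Rightarrow> real) \<Rightarrow> real measure \<Rightarrow> real" where
  "drift g \<nu> = 2 * lam * phi \<nu> * (g (R (mean \<nu>)) - (\<integral>p. g p \<partial>\<nu>))
     + (1 - 2 * lam) * (\<integral>p. g p * (s * c * (mean \<nu> - p)) \<partial>\<nu>)"

lemma R_mean_range: "is_density \<nu> \<Longrightarrow> R (mean \<nu>) \<in> {0..1}"
  using R_range mean_bounds by auto

lemma phi_bounds:
  assumes "is_density \<nu>" shows "1 - s * c \<le> phi \<nu>" "phi \<nu> \<le> 1 + s * b"
proof -
  have m: "0 \<le> mean \<nu>" "mean \<nu> \<le> 1" using mean_bounds[OF assms] by auto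
  have "s * c * mean \<nu> \<le> s * c" "s * b * mean \<nu> \<le> s * b"
    using m s_pos b_nonneg c_nonneg by (simp_all add: mult_left_le)
  moreover have "0 \<le> s * b * mean \<nu>" "0 \<le> s * c * mean \<nu>"
    using m s_pos b_nonneg c_nonneg by simp_all
  ultimately show "1 - s * c \<le> phi \<nu>" "phi \<nu> \<le> 1 + s * b"
    unfolding phi_def by (simp_all add: algebra_simps)
qed

lemma phi_pos: "is_density \<nu> \<Longrightarrow> 0 < phi \<nu>"
  using phi_bounds(1)[of \<nu>] sc_less_1 by linarith

lemma selection_density_bounds:
  assumes \<nu>: "is_density \<nu>" and p: "p \<in> {0..1}"
  shows "0 \<le> selection_density \<nu> p" "selection_density \<nu> p \<le> (1 + s * b) / (1 - s * c)"
proof -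
  have m: "0 \<le> mean \<nu>" "mean \<nu> \<le> 1" using mean_bounds[OF \<nu>] by auto
  have "s * b * mean \<nu> \<le> s * b" "s * c * p \<le> s * c"
    using m p s_pos b_nonneg c_nonneg by (auto simp: mult_left_le)
  moreover have "0 \<le> s * b * mean \<nu>" "0 \<le> s * c * p" using m p s_pos b_nonneg c_nonneg by auto
  ultimately have num: "1 - s * c \<le> 1 + s * (b * mean \<nu> - c * p)" "1 + s * (b * mean \<nu> - c * p) \<le> 1 + s * b"
    by (simp_all add: algebra_simps)
  show "0 \<le> selection_density \<nu> p"
    unfolding selection_density_def using num sc_less_1 phi_pos[OF \<nu>] by simp
  show "selection_density \<nu> p \<le> (1 + s * b) / (1 - s * c)"
    unfolding selection_density_def using num phi_bounds[OF \<nu>] sc_less_1 by (intro frac_le) auto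
qed

lemma selection_density_measurable: "selection_density \<nu> \<in> borel_measurable S01"
  unfolding selection_density_def divide_inverse
  by (rule continuous_on_measurable_S01) (intro continuous_intros)

lemma integrable_mult_id:
  assumes \<nu>: "is_density \<nu>" and g: "g \<in> borel_measurable S01"
    and gB: "\<And>x. x \<in> {0..1} \<Longrightarrow> \<bar>g x\<bar> \<le> (B::real)"
  shows "integrable \<nu> (\<lambda>p. p * g p)"
proof (rule is_density_integrable[OF \<nu>])
  show "(\<lambda>p. p * g p) \<in> borel_measurable S01"
    using g continuous_on_measurable_S01[OF continuous_on_id] by measurable
  fix x :: real assume x: "x \<in> {0..1}"
  have "\<bar>x\<bar> * \<bar>g x\<bar> \<le> \<bar>g x\<bar>" using x by (intro mult_left_le_one_le) auto
  then show "\<bar>x * g x\<bar> \<le> B" using gB[OF x] by (simp add: abs_mult)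
qed

lemma integral_selection_density:
  assumes \<nu>: "is_density \<nu>" and g: "g \<in> borel_measurable S01"
    and gB: "\<And>x. x \<in> {0..1} \<Longrightarrow> \<bar>g x\<bar> \<le> (B::real)"
  shows "(\<integral>p. selection_density \<nu> p * g p \<partial>\<nu>)
      = ((1 + s * b * mean \<nu>) * (\<integral>p. g p \<partial>\<nu>) - s * c * (\<integral>p. p * g p \<partial>\<nu>)) / phi \<nu>"
proof -
  have "(\<integral>p. selection_density \<nu> p * g p \<partial>\<nu>)
      = (\<integral>p. (1 + s * b * mean \<nu>) * g p - s * c * (p * g p) \<partial>\<nu>) / phi \<nu>"
    by (simp add: selection_density_def field_simps)
  also have "(\<integral>p. (1 + s * b * mean \<nu>) * g p - s * c * (p * g p) \<partial>\<nu>)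
      = (1 + s * b * mean \<nu>) * (\<integral>p. g p \<partial>\<nu>) - s * c * (\<integral>p. p * g p \<partial>\<nu>)"
    using is_density_integrable[OF assms] integrable_mult_id[OF assms] by simp
  finally show ?thesis .
qed

lemma is_density_selection:
  assumes \<nu>: "is_density \<nu>"
  shows "is_density (density \<nu> (\<lambda>p. ennreal (selection_density \<nu> p)))"
proof -
  interpret prob_space \<nu> using \<nu> by (simp add: is_density_def)
  have sp: "space \<nu> = {0..1}" by (rule is_density_space[OF \<nu>])
  have q_meas: "selection_density \<nu> \<in> borel_measurable \<nu>"
    using selection_density_measurable \<nu> by (auto intro: measurable_S01_cong simp: is_density_def)
  have q_int: "integrable \<nu> (selection_density \<nu>)"
    using selection_density_bounds[OF \<nu>]
    by (intro is_density_integrable[OF \<nu> selection_density_measurable]) auto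
  have "(\<integral>p. selection_density \<nu> p * 1 \<partial>\<nu>) = 1"
    using integral_selection_density[OF \<nu>, of "\<lambda>_. 1" 1] phi_pos[OF \<nu>]
    by (simp add: mean_def prob_space phi_def field_simps)
  moreover have "emeasure (density \<nu> (\<lambda>p. ennreal (selection_density \<nu> p))) (space \<nu>)
      = (\<integral>\<^sup>+p. ennreal (selection_density \<nu> p) \<partial>\<nu>)"
    using q_meas by (simp add: emeasure_density)
  moreover have "(\<integral>\<^sup>+p. ennreal (selection_density \<nu> p) \<partial>\<nu>) = ennreal (\<integral>p. selection_density \<nu> p \<partial>\<nu>)"
    using q_int selection_density_bounds(1)[OF \<nu>] sp by (intro nn_integral_eq_integral) auto
  ultimately have "emeasure (density \<nu> (\<lambda>p. ennreal (selection_density \<nu> p))) (space \<nu>) = 1"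
    by simp
  then show ?thesis
    using \<nu> unfolding is_density_def by (auto intro!: prob_spaceI)
qed

lemma Phi_eq_lincomb:
  "Phi b c s lam R \<nu> = lincomb (2 * lam) (return S01 (R (mean \<nu>)))
     (1 - 2 * lam) (density \<nu> (\<lambda>p. ennreal (selection_density \<nu> p)))"
  unfolding Phi_def selection_density_def phi_def ..

lemma is_density_Phi:
  assumes \<nu>: "is_density \<nu>" shows "is_density (Phi b c s lam R \<nu>)"
  unfolding Phi_eq_lincomb using R_mean_range[OF \<nu>] lam_nonneg lam_le_half
  by (intro is_density_lincomb is_density_selection[OF \<nu>])
    (auto simp: is_density_def intro!: prob_space_return)

lemma is_density_eta_aux:
  assumes "1 \<le> N" "is_density \<rho>0" shows "is_density (eta_aux b c s lam R N \<rho>0 k)"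
  using assms by (induction k) (auto intro!: is_density_lincomb is_density_Phi)

lemma integral_Phi:
  assumes \<nu>: "is_density \<nu>" and g: "g \<in> borel_measurable S01"
    and gB: "\<And>x. x \<in> {0..1} \<Longrightarrow> \<bar>g x\<bar> \<le> (B::real)"
  shows "(\<integral>p. g p \<partial>Phi b c s lam R \<nu>)
      = 2 * lam * g (R (mean \<nu>)) + (1 - 2 * lam) * (\<integral>p. selection_density \<nu> p * g p \<partial>\<nu>)"
proof -
  have dirac: "is_density (return S01 (R (mean \<nu>)))"
    using R_mean_range[OF \<nu>] by (auto simp: is_density_def intro!: prob_space_return)
  have sel: "is_density (density \<nu> (\<lambda>p. ennreal (selection_density \<nu> p)))"
    by (rule is_density_selection[OF \<nu>])
  have "(\<integral>p. g p \<partial>Phi b c s lam R \<nu>) = 2 * lam * (\<integral>p. g p \<partial>return S01 (R (mean \<nu>)))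
      + (1 - 2 * lam) * (\<integral>p. g p \<partial>density \<nu> (\<lambda>p. ennreal (selection_density \<nu> p)))"
    unfolding Phi_eq_lincomb using lam_nonneg lam_le_half dirac sel
    by (intro integral_lincomb[OF _ _ _ _ _ _ g gB]) (auto simp: is_density_def prob_space_def)
  also have "(\<integral>p. g p \<partial>return S01 (R (mean \<nu>))) = g (R (mean \<nu>))"
    using R_mean_range[OF \<nu>] g by (intro integral_return) auto
  also have "(\<integral>p. g p \<partial>density \<nu> (\<lambda>p. ennreal (selection_density \<nu> p)))
      = (\<integral>p. selection_density \<nu> p * g p \<partial>\<nu>)"
    using g selection_density_measurable selection_density_bounds(1)[OF \<nu>] \<nu> is_density_space[OF \<nu>]
    by (subst integral_density) (auto intro: measurable_S01_cong AE_I2 simp: is_density_def)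
  finally show ?thesis .
qed

lemma drift_eq:
  assumes \<nu>: "is_density \<nu>" and g: "g \<in> borel_measurable S01"
    and gB: "\<And>x. x \<in> {0..1} \<Longrightarrow> \<bar>g x\<bar> \<le> (B::real)"
  shows "drift g \<nu> = 2 * lam * phi \<nu> * (g (R (mean \<nu>)) - (\<integral>p. g p \<partial>\<nu>))
     + (1 - 2 * lam) * (s * c) * (mean \<nu> * (\<integral>p. g p \<partial>\<nu>) - (\<integral>p. p * g p \<partial>\<nu>))"
proof -
  have "(\<integral>p. g p * (s * c * (mean \<nu> - p)) \<partial>\<nu>) = (\<integral>p. s * c * mean \<nu> * g p - s * c * (p * g p) \<partial>\<nu>)"
    by (rule Bochner_Integration.integral_cong) (auto simp: algebra_simps)
  also have "\<dots> = s * c * mean \<nu> * (\<integral>p. g p \<partial>\<nu>) - s * c * (\<integral>p. p * g p \<partial>\<nu>)"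
    using is_density_integrable[OF assms] integrable_mult_id[OF assms] by simp
  finally have "(\<integral>p. g p * (s * c * (mean \<nu> - p)) \<partial>\<nu>)
      = s * c * mean \<nu> * (\<integral>p. g p \<partial>\<nu>) - s * c * (\<integral>p. p * g p \<partial>\<nu>)" .
  then show ?thesis unfolding drift_def by (simp only:) (simp add: algebra_simps)
qed

lemma integral_reproduction_step:
  assumes \<nu>: "is_density \<nu>" and N: "1 \<le> N" and g: "g \<in> borel_measurable S01"
    and gB: "\<And>x. x \<in> {0..1} \<Longrightarrow> \<bar>g x\<bar> \<le> (B::real)"
  shows "(\<integral>p. g p \<partial>lincomb (1 - 1 / real N) \<nu> (1 / real N) (Phi b c s lam R \<nu>))
     = (\<integral>p. g p \<partial>\<nu>) + drift g \<nu> / (real N * phi \<nu>)"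
proof -
  have step: "(\<integral>p. g p \<partial>lincomb (1 - 1 / real N) \<nu> (1 / real N) (Phi b c s lam R \<nu>))
      = (1 - 1 / real N) * (\<integral>p. g p \<partial>\<nu>) + (1 / real N) * (\<integral>p. g p \<partial>Phi b c s lam R \<nu>)"
    using \<nu> is_density_Phi[OF \<nu>] N
    by (intro integral_lincomb[OF _ _ _ _ _ _ g gB]) (auto simp: is_density_def prob_space_def)
  also have "\<dots> = (1 - 1 / real N) * (\<integral>p. g p \<partial>\<nu>) + (1 / real N) * (2 * lam * g (R (mean \<nu>))
      + (1 - 2 * lam) * (((phi \<nu> + s * c * mean \<nu>) * (\<integral>p. g p \<partial>\<nu>) - s * c * (\<integral>p. p * g p \<partial>\<nu>)) / phi \<nu>))"
    by (simp only: integral_Phi[OF \<nu> g gB] integral_selection_density[OF \<nu> g gB])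
      (simp add: phi_def algebra_simps)
  also have "\<dots> = (\<integral>p. g p \<partial>\<nu>) + drift g \<nu> / (real N * phi \<nu>)"
    using phi_pos[OF \<nu>] N by (simp only: drift_eq[OF \<nu> g gB]) (simp add: field_simps)
  finally show ?thesis .
qed

definition drift_sup :: real where
  "drift_sup = 2 * (1 + s * b) + 2 * s * c"

lemma drift_sup_nonneg: "0 \<le> drift_sup"
  unfolding drift_sup_def using s_pos b_nonneg c_nonneg by simp

lemma drift_eq_bl_test:
  assumes \<nu>: "is_density \<nu>" and f: "f \<in> bl_tests"
  shows "drift f \<nu> = 2 * lam * phi \<nu> * (f (R (mean \<nu>)) - (\<integral>p. f p \<partial>\<nu>))
     + (1 - 2 * lam) * (s * c) * (mean \<nu> * (\<integral>p. f p \<partial>\<nu>) - (\<integral>p. p * f p \<partial>\<nu>))"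
  by (rule drift_eq[OF \<nu> bl_test_measurable[OF f] bl_test_bound[OF f]])

lemma abs_drift_le:
  assumes \<nu>: "is_density \<nu>" and f: "f \<in> bl_tests"
  shows "\<bar>drift f \<nu>\<bar> \<le> drift_sup"
proof -
  define m I J where "m = mean \<nu>" and "I = (\<integral>p. f p \<partial>\<nu>)" and "J = (\<integral>p. p * f p \<partial>\<nu>)"
  have m: "0 \<le> m" "m \<le> 1" using mean_bounds[OF \<nu>] by (auto simp: m_def)
  have I: "\<bar>I\<bar> \<le> 1" unfolding I_def by (rule abs_integral_le_bound[OF \<nu> bl_test_bound[OF f]])
  have J: "\<bar>J\<bar> \<le> 1" unfolding J_def by (rule abs_integral_le_bound[OF \<nu> bl_test_mult_id_bound[OF f]])
  have F: "\<bar>f (R m)\<bar> \<le> 1" using bl_test_bound[OF f] R_mean_range[OF \<nu>] by (simp add: m_def)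
  have "\<bar>phi \<nu>\<bar> \<le> 1 + s * b" using phi_bounds[OF \<nu>] sc_less_1 by (simp add: abs_le_iff)
  then have t1: "\<bar>(2 * lam) * phi \<nu> * (f (R m) - I)\<bar> \<le> 1 * (1 + s * b) * 2"
    using lam_nonneg lam_le_half F I by (intro abs_mult_le_mult) auto
  have "\<bar>m * I - J\<bar> \<le> 2"
    using abs_mult_le_mult[of m 1 I 1] m I J by (simp add: abs_le_iff)
  then have t2: "\<bar>(1 - 2 * lam) * (s * c) * (m * I - J)\<bar> \<le> 1 * (s * c) * 2"
    using lam_nonneg lam_le_half s_pos c_nonneg by (intro abs_mult_le_mult) auto
  show ?thesis
    using t1 t2 unfolding drift_eq_bl_test[OF \<nu> f] drift_sup_def m_def[symmetric] I_def[symmetric] J_def[symmetric]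
    by linarith
qed

definition inv_phi_max :: real where
  "inv_phi_max = 1 / (1 - s * c)"

lemma inv_phi_max_pos: "0 < inv_phi_max"
  unfolding inv_phi_max_def using sc_less_1 by simp

end

section \<open>The mean-field solution\<close>

locale mean_field = reproduction +
  fixes LR :: real and \<rho>0 :: "real measure" and \<rho> :: "real \<Rightarrow> real measure"
  assumes R_lipschitz: "lipschitz_on LR {0..1} R"
    and solution: "mean_field_solution b c s lam R \<rho>0 \<rho>"
begin

definition drift_lip :: real where
  "drift_lip = 2 * s * (b + c) + (1 + s * b) * (LR + 1) + 4 * s * c"

lemma drift_lip_nonneg: "0 \<le> drift_lip"
  unfolding drift_lip_def using s_pos b_nonneg c_nonneg lipschitz_on_nonneg[OF R_lipschitz] by simp

lemma drift_diff_le: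
  assumes \<mu>: "is_density \<mu>" and \<nu>: "is_density \<nu>" and E: "bl_close \<mu> \<nu> E" and f: "f \<in> bl_tests"
  shows "\<bar>drift f \<mu> - drift f \<nu>\<bar> \<le> drift_lip * E"
proof -
  have mm: "\<bar>mean \<mu> - mean \<nu>\<bar> \<le> E" by (rule bl_close_mean[OF E])
  have "\<bar>phi \<mu> - phi \<nu>\<bar> = \<bar>s * (b - c)\<bar> * \<bar>mean \<mu> - mean \<nu>\<bar>"
    by (simp add: phi_def abs_mult[symmetric] algebra_simps)
  also have "\<dots> \<le> s * (b + c) * E"
    using s_pos b_nonneg c_nonneg mm by (intro mult_mono) (auto simp: abs_mult)
  finally have pp: "\<bar>phi \<mu> - phi \<nu>\<bar> \<le> s * (b + c) * E" .
  have p\<nu>: "\<bar>phi \<nu>\<bar> \<le> 1 + s * b" using phi_bounds[OF \<nu>] sc_less_1 by (simp add: abs_le_iff)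
  have II: "\<bar>(\<integral>p. f p \<partial>\<mu>) - (\<integral>p. f p \<partial>\<nu>)\<bar> \<le> E" using E f unfolding bl_close_def by blast
  have JJ: "\<bar>(\<integral>p. p * f p \<partial>\<mu>) - (\<integral>p. p * f p \<partial>\<nu>)\<bar> \<le> 2 * E"
    by (rule bl_close_lipschitz_integral[OF \<mu> \<nu> E lipschitz_mult_id_bl_test[OF f]])
  have "\<bar>f (R (mean \<mu>)) - f (R (mean \<nu>))\<bar> \<le> \<bar>R (mean \<mu>) - R (mean \<nu>)\<bar>"
    using bl_test_lipschitz[OF f R_mean_range[OF \<mu>] R_mean_range[OF \<nu>]] .
  also have "\<dots> \<le> LR * \<bar>mean \<mu> - mean \<nu>\<bar>"
    using lipschitz_on_abs_diff[OF R_lipschitz] mean_bounds[OF \<mu>] mean_bounds[OF \<nu>] by auto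
  also have "\<dots> \<le> LR * E" using mm lipschitz_on_nonneg[OF R_lipschitz] by (simp add: mult_left_mono)
  finally have FF: "\<bar>f (R (mean \<mu>)) - f (R (mean \<nu>))\<bar> \<le> LR * E" .
  show ?thesis
    unfolding drift_eq_bl_test[OF \<mu> f] drift_eq_bl_test[OF \<nu> f] drift_lip_def
    using drift_diff_arith[OF _ _ _ pp p\<nu> mm _ _ II _ JJ FF, of "2 * lam" "s * c"]
      lam_nonneg lam_le_half s_pos c_nonneg mean_bounds[OF \<nu>]
      abs_integral_le_bound[OF \<mu> bl_test_bound[OF f]] bl_test_bound[OF f R_mean_range[OF \<mu>]]
    by (simp add: mult.assoc)
qed

lemma rho_0: "\<rho> 0 = \<rho>0"
  using solution by (simp add: mean_field_solution_def)

lemma is_density_rho: "0 \<le> t \<Longrightarrow> is_density (\<rho> t)"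
  using solution unfolding mean_field_solution_def by blast

lemma is_density_rho0: "is_density \<rho>0"
  using is_density_rho[of 0] rho_0 by simp

lemma rho_has_derivative:
  assumes f: "f \<in> bl_tests" and t: "0 \<le> t"
  shows "((\<lambda>u. \<integral>p. f p \<partial>\<rho> u) has_real_derivative drift f (\<rho> t)) (at t within {0..})"
  using solution t f unfolding mean_field_solution_def drift_def phi_def bl_tests_def by blast

lemma bl_close_rho_time:
  assumes u: "0 \<le> u" and v: "0 \<le> v"
  shows "bl_close (\<rho> v) (\<rho> u) (drift_sup * \<bar>v - u\<bar>)"
  unfolding bl_close_def
proof
  fix f assume f: "f \<in> bl_tests"
  define S where "S = {min u v..max u v}"
  have "norm ((\<lambda>w. \<integral>p. f p \<partial>\<rho> w) v - (\<lambda>w. \<integral>p. f p \<partial>\<rho> w) u) \<le> drift_sup * norm (v - u)"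
  proof (rule field_differentiable_bound[where S=S])
    fix z assume z: "z \<in> S"
    then have z0: "0 \<le> z" using u v unfolding S_def by auto
    show "((\<lambda>w. \<integral>p. f p \<partial>\<rho> w) has_field_derivative drift f (\<rho> z)) (at z within S)"
      by (rule DERIV_subset[OF rho_has_derivative[OF f z0]]) (use u v in \<open>auto simp: S_def\<close>)
    show "norm (drift f (\<rho> z)) \<le> drift_sup" using abs_drift_le[OF is_density_rho[OF z0] f] by simp
  qed (auto simp: S_def)
  then show "\<bar>(\<integral>p. f p \<partial>\<rho> v) - (\<integral>p. f p \<partial>\<rho> u)\<bar> \<le> drift_sup * \<bar>v - u\<bar>" by simp
qed

text \<open>Since the drift is Lipschitz along the solution, the Euler step has a quadratic local error.\<close>
lemma rho_euler_error:
  assumes f: "f \<in> bl_tests" and u: "0 \<le> u" and h: "0 \<le> h"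
  shows "\<bar>(\<integral>p. f p \<partial>\<rho> (u + h)) - (\<integral>p. f p \<partial>\<rho> u) - h * drift f (\<rho> u)\<bar>
    \<le> drift_lip * drift_sup * h\<^sup>2"
proof -
  define S where "S = {u..u + h}"
  define \<psi> where "\<psi> w = (\<integral>p. f p \<partial>\<rho> w) - w * drift f (\<rho> u)" for w
  have "norm (\<psi> (u + h) - \<psi> u) \<le> (drift_lip * (drift_sup * h)) * norm (u + h - u)"
  proof (rule field_differentiable_bound[where S=S])
    fix z assume z: "z \<in> S"
    then have z0: "0 \<le> z" using u unfolding S_def by auto
    have "((\<lambda>w. \<integral>p. f p \<partial>\<rho> w) has_field_derivative drift f (\<rho> z)) (at z within S)"
      by (rule DERIV_subset[OF rho_has_derivative[OF f z0]]) (use u in \<open>auto simp: S_def\<close>)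
    then show "(\<psi> has_field_derivative (drift f (\<rho> z) - drift f (\<rho> u))) (at z within S)"
      unfolding \<psi>_def by (auto intro!: derivative_eq_intros)
    have "\<bar>drift f (\<rho> z) - drift f (\<rho> u)\<bar> \<le> drift_lip * (drift_sup * \<bar>z - u\<bar>)"
      by (rule drift_diff_le[OF is_density_rho[OF z0] is_density_rho[OF u] bl_close_rho_time[OF u z0] f])
    also have "\<dots> \<le> drift_lip * (drift_sup * h)"
      using z drift_sup_nonneg drift_lip_nonneg unfolding S_def by (auto intro!: mult_left_mono)
    finally show "norm (drift f (\<rho> z) - drift f (\<rho> u)) \<le> drift_lip * (drift_sup * h)" by simp
  qed (use h in \<open>auto simp: S_def\<close>)
  moreover have "\<psi> (u + h) - \<psi> u = (\<integral>p. f p \<partial>\<rho> (u + h)) - (\<integral>p. f p \<partial>\<rho> u) - h * drift f (\<rho> u)"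
    unfolding \<psi>_def by (simp add: algebra_simps)
  ultimately show ?thesis using h by (simp add: power2_eq_square mult.assoc)
qed

definition horizon :: "real \<Rightarrow> real" where
  "horizon t = (1 + s * b) * (t + 2 * inv_phi_max) + 2"

definition gronwall_const :: "real \<Rightarrow> real" where
  "gronwall_const t = horizon t * drift_lip * drift_sup * inv_phi_max\<^sup>2 * exp (drift_lip * inv_phi_max * horizon t)"

definition error_const :: "real \<Rightarrow> real" where
  "error_const t = gronwall_const t + 3 * drift_sup * inv_phi_max + 5 / 2 * horizon t"

lemma horizon_nonneg: "0 \<le> t \<Longrightarrow> 0 \<le> horizon t"
  unfolding horizon_def using s_pos b_nonneg inv_phi_max_pos by simp

lemma gronwall_const_nonneg: "0 \<le> t \<Longrightarrow> 0 \<le> gronwall_const t"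
  unfolding gronwall_const_def using horizon_nonneg drift_lip_nonneg drift_sup_nonneg by simp

lemma error_const_nonneg: "0 \<le> t \<Longrightarrow> 0 \<le> error_const t"
  unfolding error_const_def
  using gronwall_const_nonneg horizon_nonneg drift_sup_nonneg inv_phi_max_pos by simp

end

section \<open>Independent exponential clocks\<close>

lemma (in prob_space) expectation_square_sum_indep:
  fixes Y :: "'i \<Rightarrow> 'a \<Rightarrow> real"
  assumes ind: "indep_vars (\<lambda>_. borel) Y L" and L: "finite L"
    and int: "\<And>l. l \<in> L \<Longrightarrow> integrable M (Y l)"
    and sq: "\<And>l. l \<in> L \<Longrightarrow> integrable M (\<lambda>x. (Y l x)\<^sup>2)"
    and centered: "\<And>l. l \<in> L \<Longrightarrow> expectation (Y l) = 0"
  shows "integrable M (\<lambda>x. (\<Sum>l\<in>L. Y l x)\<^sup>2)"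
    and "expectation (\<lambda>x. (\<Sum>l\<in>L. Y l x)\<^sup>2) = (\<Sum>l\<in>L. expectation (\<lambda>x. (Y l x)\<^sup>2))"
proof -
  have cross: "integrable M (\<lambda>x. Y l x * Y l' x)
      \<and> expectation (\<lambda>x. Y l x * Y l' x) = (if l = l' then expectation (\<lambda>x. (Y l x)\<^sup>2) else 0)"
    if l: "l \<in> L" "l' \<in> L" for l l'
  proof (cases "l = l'")
    case False
    have ind2: "indep_vars (\<lambda>_. borel) Y {l, l'}" by (rule indep_vars_subset[OF ind]) (use l in auto)
    have "integrable M (\<lambda>x. \<Prod>i\<in>{l, l'}. Y i x)"
      "expectation (\<lambda>x. \<Prod>i\<in>{l, l'}. Y i x) = (\<Prod>i\<in>{l, l'}. expectation (Y i))"
      using indep_vars_integrable[OF _ ind2] indep_vars_lebesgue_integral[OF _ ind2] int l by auto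
    then show ?thesis using False centered l by simp
  qed (use sq[OF l(1)] in \<open>simp add: power2_eq_square\<close>)
  have sum_sq: "(\<lambda>x. (\<Sum>l\<in>L. Y l x)\<^sup>2) = (\<lambda>x. \<Sum>l\<in>L. \<Sum>l'\<in>L. Y l x * Y l' x)"
    by (auto simp: power2_eq_square sum_product)
  show "integrable M (\<lambda>x. (\<Sum>l\<in>L. Y l x)\<^sup>2)" unfolding sum_sq using cross L by auto
  have "expectation (\<lambda>x. (\<Sum>l\<in>L. Y l x)\<^sup>2) = (\<Sum>l\<in>L. \<Sum>l'\<in>L. expectation (\<lambda>x. Y l x * Y l' x))"
    unfolding sum_sq using cross by (simp add: Bochner_Integration.integral_sum)
  also have "\<dots> = (\<Sum>l\<in>L. \<Sum>l'\<in>L. if l = l' then expectation (\<lambda>x. (Y l x)\<^sup>2) else 0)"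
    using cross by (intro sum.cong refl) auto
  finally show "expectation (\<lambda>x. (\<Sum>l\<in>L. Y l x)\<^sup>2) = (\<Sum>l\<in>L. expectation (\<lambda>x. (Y l x)\<^sup>2))"
    using L by simp
qed

lemma (in prob_space) Chebyshev_sum_indep:
  fixes Y :: "'i \<Rightarrow> 'a \<Rightarrow> real"
  assumes ind: "indep_vars (\<lambda>_. borel) Y L" and L: "finite L"
    and int: "\<And>l. l \<in> L \<Longrightarrow> integrable M (Y l)"
    and sq: "\<And>l. l \<in> L \<Longrightarrow> integrable M (\<lambda>x. (Y l x)\<^sup>2)"
    and centered: "\<And>l. l \<in> L \<Longrightarrow> expectation (Y l) = 0" and a: "0 < a"
  shows "prob {x \<in> space M. a \<le> \<bar>\<Sum>l\<in>L. Y l x\<bar>} \<le> (\<Sum>l\<in>L. expectation (\<lambda>x. (Y l x)\<^sup>2)) / a\<^sup>2"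
proof -
  have "random_variable borel (Y l)" if "l \<in> L" for l
    using ind that unfolding indep_vars_def by blast
  then have "random_variable borel (\<lambda>x. \<Sum>l\<in>L. Y l x)" by (intro borel_measurable_sum) auto
  moreover have "expectation (\<lambda>x. \<Sum>l\<in>L. Y l x) = 0"
    using int centered by (simp add: Bochner_Integration.integral_sum)
  ultimately show ?thesis
    using Chebyshev_inequality[of "\<lambda>x. \<Sum>l\<in>L. Y l x" a] expectation_square_sum_indep[OF assms(1-5)] a
    by simp
qed

lemma (in prob_space) exponential_centered_moments:
  assumes r: "0 < r" and X: "distributed M lborel X (exponential_density r)"
  shows "integrable M (\<lambda>x. X x - 1 / r)" and "integrable M (\<lambda>x. (X x - 1 / r)\<^sup>2)"
    and "expectation (\<lambda>x. X x - 1 / r) = 0" and "expectation (\<lambda>x. (X x - 1 / r)\<^sup>2) = 1 / r\<^sup>2"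
proof -
  have i1: "integrable M X" and i2: "integrable M (\<lambda>x. (X x)\<^sup>2)"
    using erlang_ith_moment_integrable[OF r X, of 1] erlang_ith_moment_integrable[OF r X, of 2] by simp_all
  have e: "expectation X = 1 / r" by (rule exponential_distributed_expectation[OF r X])
  show "integrable M (\<lambda>x. X x - 1 / r)" using i1 by simp
  have "(\<lambda>x. (X x - 1 / r)\<^sup>2) = (\<lambda>x. (X x)\<^sup>2 - 2 / r * X x + 1 / r\<^sup>2)"
    using r by (auto simp: fun_eq_iff power2_eq_square field_simps)
  then show "integrable M (\<lambda>x. (X x - 1 / r)\<^sup>2)" using i1 i2 by simp
  show "expectation (\<lambda>x. X x - 1 / r) = 0" using i1 e prob_space by simp
  show "expectation (\<lambda>x. (X x - 1 / r)\<^sup>2) = 1 / r\<^sup>2"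
    using exponential_distributed_variance[OF r X] e by simp
qed

lemma (in prob_space) AE_exponential_distributed_pos:
  assumes r: "0 < r" and X: "distributed M lborel X (exponential_density r)"
  shows "AE x in M. 0 < X x"
proof -
  have "prob {x \<in> space M. X x \<le> 0} = 0"
    using exponential_distributedD_le[OF X _ r, of 0] by simp
  moreover have "{x \<in> space M. X x \<le> 0} \<in> events"
    using distributed_measurable[OF X] by measurable
  ultimately show ?thesis
    by (subst (asm) prob_eq_0) (auto elim!: eventually_mono)
qed

lemma (in prob_space) nn_integral_le_off_event:
  fixes f :: "'a \<Rightarrow> real"
  assumes E: "E \<in> events" and a: "0 \<le> a" and b: "0 \<le> b"
    and bounded: "AE \<omega> in M. f \<omega> \<le> b" and off: "AE \<omega> in M. \<omega> \<notin> E \<longrightarrow> f \<omega> \<le> a"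
  shows "(\<integral>\<^sup>+\<omega>. ennreal (f \<omega>) \<partial>M) \<le> ennreal (a + b * prob E)"
proof -
  have "AE \<omega> in M. ennreal (f \<omega>) \<le> ennreal a + ennreal b * indicator E \<omega>"
    using bounded off
  proof eventually_elim
    case (elim \<omega>)
    then show ?case
      using a b by (cases "\<omega> \<in> E") (auto simp: ennreal_plus[symmetric] simp del: ennreal_plus intro!: ennreal_leI)
  qed
  then have "(\<integral>\<^sup>+\<omega>. ennreal (f \<omega>) \<partial>M) \<le> (\<integral>\<^sup>+\<omega>. ennreal a + ennreal b * indicator E \<omega> \<partial>M)"
    by (rule nn_integral_mono_AE)
  also have "\<dots> = ennreal a + ennreal b * emeasure M E"
    using E by (simp add: nn_integral_add nn_integral_cmult_indicator emeasure_space_1)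
  also have "\<dots> = ennreal (a + b * prob E)"
    using a b by (simp add: emeasure_eq_measure ennreal_plus ennreal_mult)
  finally show ?thesis .
qed

lemma tau_mono:
  assumes nonneg: "\<And>l. 1 \<le> l \<Longrightarrow> 0 \<le> dt l \<omega>" and k: "k \<le> k'"
  shows "tau dt k \<omega> \<le> tau dt k' \<omega>"
  unfolding tau_def using k nonneg by (intro sum_mono2) auto

lemma kappa_between:
  assumes nonneg: "\<And>l. 1 \<le> l \<Longrightarrow> 0 \<le> dt l \<omega>"
    and k1: "tau dt k1 \<omega> \<le> t" and k2: "t < tau dt k2 \<omega>"
  shows "k1 \<le> kappa dt t \<omega>" and "kappa dt t \<omega> < k2"
proof -
  have bound: "k \<le> k2" if "tau dt k \<omega> \<le> t" for k
    using that k2 tau_mono[of dt \<omega> k2 k, OF nonneg] by (meson not_le less_le_trans order.strict_implies_order)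
  show "k1 \<le> kappa dt t \<omega>"
    unfolding kappa_def by (rule Greatest_le_nat[where P = "\<lambda>k. tau dt k \<omega> \<le> t", OF k1 bound])
  have "tau dt (kappa dt t \<omega>) \<omega> \<le> t"
    unfolding kappa_def by (rule GreatestI_nat[where P = "\<lambda>k. tau dt k \<omega> \<le> t", OF k1 bound])
  with bound[OF this] k2 show "kappa dt t \<omega> < k2" by (auto simp: le_less)
qed

section \<open>The Euler scheme\<close>

text \<open>\<open>euler_time k\<close> is the time reached after \<open>k\<close> Euler steps, while \<open>mean_tau k\<close> is the
  paper's \<open>\<langle>\<tau>_k\<rangle>\<close>, whose sum starts at the second step.\<close>
locale euler_scheme = mean_field +
  fixes N :: nat
  assumes N_pos: "1 \<le> N"
begin

definition eta :: "nat \<Rightarrow> real measure" where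
  "eta k = eta_aux b c s lam R N \<rho>0 k"

definition step :: "nat \<Rightarrow> real" where
  "step k = 1 / (real N * phi (eta k))"

definition euler_time :: "nat \<Rightarrow> real" where
  "euler_time k = (\<Sum>l<k. step l)"

definition mean_tau :: "nat \<Rightarrow> real" where
  "mean_tau k = (\<Sum>l\<in>{1..<k}. step l)"

lemma is_density_eta: "is_density (eta k)"
  unfolding eta_def by (rule is_density_eta_aux[OF N_pos is_density_rho0])

lemma eta_Suc: "eta (Suc k) = lincomb (1 - 1 / real N) (eta k) (1 / real N) (Phi b c s lam R (eta k))"
  unfolding eta_def by simp

lemma step_bounds:
  shows step_pos: "0 < step k" and step_le: "step k \<le> inv_phi_max / real N"
    and step_ge: "1 / (real N * (1 + s * b)) \<le> step k"
proof -
  note p = phi_bounds[OF is_density_eta] phi_pos[OF is_density_eta]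
  have N: "0 < real N" using N_pos by simp
  show "0 < step k" unfolding step_def using p N by simp
  show "step k \<le> inv_phi_max / real N"
    unfolding step_def inv_phi_max_def using p N sc_less_1
    by (simp add: frac_le mult_left_mono mult.commute)
  show "1 / (real N * (1 + s * b)) \<le> step k"
    unfolding step_def using p N by (simp add: frac_le mult_left_mono)
qed

lemma euler_time_nonneg: "0 \<le> euler_time k"
  unfolding euler_time_def using step_pos by (simp add: sum_nonneg less_imp_le)

lemma euler_time_Suc: "euler_time (Suc k) = euler_time k + step k"
  unfolding euler_time_def by simp

lemma mean_tau_mono: "k \<le> k' \<Longrightarrow> mean_tau k \<le> mean_tau k'"
  unfolding mean_tau_def using step_pos by (intro sum_mono2) (auto intro: less_imp_le)

lemma mean_tau_Suc_le: "mean_tau (Suc k) \<le> mean_tau k + inv_phi_max / real N"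
proof (cases "k = 0")
  case False
  then have "{1..<Suc k} = insert k {1..<k}" by auto
  then show ?thesis using step_le[of k] by (simp add: mean_tau_def)
qed (use inv_phi_max_pos N_pos in \<open>simp add: mean_tau_def\<close>)

lemma mean_tau_ge: "(real k - 1) / (real N * (1 + s * b)) \<le> mean_tau k"
proof -
  have "real (k - 1) / (real N * (1 + s * b)) \<le> mean_tau k"
    using sum_mono[of "{1..<k}" "\<lambda>_. 1 / (real N * (1 + s * b))" step] step_ge
    by (simp add: mean_tau_def)
  moreover have "(real k - 1) / (real N * (1 + s * b)) \<le> real (k - 1) / (real N * (1 + s * b))"
    using N_pos s_pos b_nonneg by (intro divide_right_mono) (auto simp: of_nat_diff)
  ultimately show ?thesis by linarith
qed

lemma mean_tau_unbounded: "\<exists>k. x < mean_tau k"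
proof -
  define k where "k = nat \<lceil>real N * (1 + s * b) * x\<rceil> + 2"
  have "0 < real N * (1 + s * b)" using N_pos s_pos b_nonneg by (simp add: add_pos_nonneg)
  moreover have "real N * (1 + s * b) * x < real k - 1" unfolding k_def by linarith
  ultimately have "x < (real k - 1) / (real N * (1 + s * b))" by (simp add: field_simps)
  then show ?thesis using mean_tau_ge[of k] by (meson less_le_trans)
qed

lemma abs_euler_time_mean_tau: "\<bar>euler_time k - mean_tau k\<bar> \<le> inv_phi_max / real N"
proof (cases k)
  case (Suc j)
  have "{..<Suc j} = insert 0 {1..<Suc j}" by auto
  then have "euler_time k = step 0 + mean_tau k" unfolding euler_time_def mean_tau_def Suc by simp
  then show ?thesis using step_pos[of 0] step_le[of 0] by simp
qed (use inv_phi_max_pos N_pos in \<open>simp add: euler_time_def mean_tau_def\<close>)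

lemma sum_step_sq_le: "(\<Sum>l\<in>{1..<k}. (step l)\<^sup>2) \<le> real k * (inv_phi_max / real N)\<^sup>2"
proof -
  have "(\<Sum>l\<in>{1..<k}. (step l)\<^sup>2) \<le> (\<Sum>l\<in>{1..<k}. (inv_phi_max / real N)\<^sup>2)"
    using step_pos step_le by (intro sum_mono power_mono) (auto intro: less_imp_le)
  also have "\<dots> \<le> real k * (inv_phi_max / real N)\<^sup>2" by (simp add: mult_right_mono)
  finally show ?thesis .
qed

lemma bl_close_euler_step:
  assumes E: "bl_close (eta k) (\<rho> (euler_time k)) E"
  shows "bl_close (eta (Suc k)) (\<rho> (euler_time (Suc k)))
    ((1 + drift_lip * inv_phi_max / real N) * E + drift_lip * drift_sup * (inv_phi_max / real N)\<^sup>2)"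
  unfolding bl_close_def
proof
  fix f assume f: "f \<in> bl_tests"
  define h \<sigma> where "h = step k" and "\<sigma> = euler_time k"
  have h: "0 < h" "h \<le> inv_phi_max / real N" using step_bounds by (auto simp: h_def)
  have \<sigma>: "0 \<le> \<sigma>" unfolding \<sigma>_def by (rule euler_time_nonneg)
  have eta_step: "(\<integral>p. f p \<partial>eta (Suc k)) = (\<integral>p. f p \<partial>eta k) + h * drift f (eta k)"
    unfolding eta_Suc h_def step_def
    using integral_reproduction_step[OF is_density_eta N_pos bl_test_measurable[OF f] bl_test_bound[OF f]]
    by simp
  have rho_step: "\<bar>(\<integral>p. f p \<partial>\<rho> (\<sigma> + h)) - (\<integral>p. f p \<partial>\<rho> \<sigma>) - h * drift f (\<rho> \<sigma>)\<bar>
      \<le> drift_lip * drift_sup * (inv_phi_max / real N)\<^sup>2"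
    using rho_euler_error[OF f \<sigma>, of h] h drift_lip_nonneg drift_sup_nonneg
    by (smt (verit, best) mult_left_mono power_mono mult_nonneg_nonneg)
  have "\<bar>h * drift f (eta k) - h * drift f (\<rho> \<sigma>)\<bar> = h * \<bar>drift f (eta k) - drift f (\<rho> \<sigma>)\<bar>"
    using h by (simp add: right_diff_distrib[symmetric] abs_mult)
  also have "\<dots> \<le> (inv_phi_max / real N) * (drift_lip * E)"
    using drift_diff_le[OF is_density_eta is_density_rho[OF \<sigma>] E[folded \<sigma>_def] f] h
    by (intro mult_mono) auto
  finally have drift_step: "\<bar>h * drift f (eta k) - h * drift f (\<rho> \<sigma>)\<bar> \<le> drift_lip * inv_phi_max / real N * E"
    by (simp add: ac_simps)
  have "\<bar>(\<integral>p. f p \<partial>eta k) - (\<integral>p. f p \<partial>\<rho> \<sigma>)\<bar> \<le> E" using E f unfolding bl_close_def \<sigma>_def by blast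
  then show "\<bar>(\<integral>p. f p \<partial>eta (Suc k)) - (\<integral>p. f p \<partial>\<rho> (euler_time (Suc k)))\<bar>
      \<le> (1 + drift_lip * inv_phi_max / real N) * E + drift_lip * drift_sup * (inv_phi_max / real N)\<^sup>2"
    using eta_step rho_step drift_step unfolding euler_time_Suc \<sigma>_def[symmetric] h_def[symmetric]
    by (simp add: algebra_simps)
qed

lemma bl_close_eta_euler_time:
  defines "a \<equiv> drift_lip * inv_phi_max / real N"
    and "e \<equiv> drift_lip * drift_sup * (inv_phi_max / real N)\<^sup>2"
  shows "bl_close (eta k) (\<rho> (euler_time k)) (real k * e * (1 + a) ^ k)"
proof (induction k)
  case 0
  show ?case by (simp add: eta_def euler_time_def bl_close_def rho_0)
next
  case (Suc k)
  have a: "0 \<le> a" unfolding a_def using drift_lip_nonneg inv_phi_max_pos by simp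
  have e: "0 \<le> e" unfolding e_def using drift_lip_nonneg drift_sup_nonneg by simp
  have "(1 + a) * (real k * e * (1 + a) ^ k) + e \<le> real (Suc k) * e * (1 + a) ^ Suc k"
    using mult_left_mono[OF one_le_power[of "1 + a" "Suc k"] e] a by (simp add: algebra_simps)
  with bl_close_euler_step[OF Suc.IH] show ?case
    unfolding a_def e_def by (rule bl_close_mono)
qed

lemma bl_dist_eta_rho_le:
  assumes t: "0 \<le> t" and Q: "0 \<le> Q" and j: "real j \<le> real N * Q"
    and jt: "\<bar>mean_tau j - t\<bar> \<le> \<epsilon>"
  shows "bl_dist (eta j) (\<rho> t)
    \<le> Q * drift_lip * drift_sup * inv_phi_max\<^sup>2 * exp (drift_lip * inv_phi_max * Q) / real N
      + drift_sup * (\<epsilon> + inv_phi_max / real N)"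
proof -
  define a where "a = drift_lip * inv_phi_max / real N"
  define e where "e = drift_lip * drift_sup * (inv_phi_max / real N)\<^sup>2"
  have N: "0 < real N" using N_pos by simp
  have a: "0 \<le> a" unfolding a_def using drift_lip_nonneg inv_phi_max_pos by simp
  have e: "0 \<le> e" unfolding e_def using drift_lip_nonneg drift_sup_nonneg by simp
  have "(1 + a) ^ j \<le> exp a ^ j" using a by (intro power_mono) (auto simp: add.commute)
  also have "\<dots> = exp (real j * a)" by (simp add: exp_of_nat_mult)
  also have "\<dots> \<le> exp (real N * Q * a)" using j a by (simp add: mult_right_mono)
  also have "real N * Q * a = drift_lip * inv_phi_max * Q" unfolding a_def using N by simp
  finally have growth: "(1 + a) ^ j \<le> exp (drift_lip * inv_phi_max * Q)" .
  have "real j * e \<le> real N * Q * e" using j e by (intro mult_right_mono) auto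
  also have "\<dots> = Q * drift_lip * drift_sup * inv_phi_max\<^sup>2 / real N"
    unfolding e_def using N by (simp add: power2_eq_square field_simps)
  finally have "real j * e * (1 + a) ^ j
      \<le> Q * drift_lip * drift_sup * inv_phi_max\<^sup>2 / real N * exp (drift_lip * inv_phi_max * Q)"
    using growth e a Q drift_lip_nonneg drift_sup_nonneg by (intro mult_mono) auto
  moreover have "drift_sup * \<bar>euler_time j - t\<bar> \<le> drift_sup * (\<epsilon> + inv_phi_max / real N)"
    using abs_euler_time_mean_tau[of j] jt drift_sup_nonneg by (intro mult_left_mono) auto
  moreover have "bl_close (eta j) (\<rho> t) (real j * e * (1 + a) ^ j + drift_sup * \<bar>euler_time j - t\<bar>)"
    unfolding a_def e_def
    by (rule bl_close_trans[OF bl_close_eta_euler_time bl_close_rho_time[OF t euler_time_nonneg]])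
  ultimately show ?thesis
    by (intro bl_dist_le) (auto elim!: bl_close_mono)
qed

definition window_lo :: "real \<Rightarrow> real \<Rightarrow> nat" where
  "window_lo t \<epsilon> = (LEAST k. t - \<epsilon> \<le> mean_tau k)"

definition window_hi :: "real \<Rightarrow> real \<Rightarrow> nat" where
  "window_hi t \<epsilon> = (LEAST k. t + \<epsilon> < mean_tau k)"

lemma window_hi_gt: "t + \<epsilon> < mean_tau (window_hi t \<epsilon>)"
  unfolding window_hi_def using mean_tau_unbounded by (rule LeastI_ex)

lemma window_hi_pred:
  assumes "0 < t + \<epsilon>"
  shows "window_hi t \<epsilon> \<noteq> 0" and "mean_tau (window_hi t \<epsilon> - 1) \<le> t + \<epsilon>"
proof -
  show nz: "window_hi t \<epsilon> \<noteq> 0"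
  proof
    assume "window_hi t \<epsilon> = 0"
    then show False using window_hi_gt[of t \<epsilon>] assms by (simp add: mean_tau_def)
  qed
  have "\<not> t + \<epsilon> < mean_tau (window_hi t \<epsilon> - 1)"
    unfolding window_hi_def by (rule not_less_Least) (use nz in \<open>simp add: window_hi_def\<close>)
  then show "mean_tau (window_hi t \<epsilon> - 1) \<le> t + \<epsilon>" by simp
qed

lemma window_hi_le:
  assumes t: "0 < t" and \<epsilon>: "0 < \<epsilon>" "\<epsilon> \<le> 2 * inv_phi_max"
  shows "real (window_hi t \<epsilon>) \<le> real N * horizon t"
proof -
  let ?k = "window_hi t \<epsilon>"
  have pos: "0 < real N * (1 + s * b)" using N_pos s_pos b_nonneg by (simp add: add_pos_nonneg)
  have "(real (?k - 1) - 1) / (real N * (1 + s * b)) \<le> t + \<epsilon>"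
    using mean_tau_ge[of "?k - 1"] window_hi_pred(2)[of t \<epsilon>] t \<epsilon> by linarith
  then have "real (?k - 1) - 1 \<le> real N * (1 + s * b) * (t + \<epsilon>)" using pos by (simp add: field_simps)
  moreover have "real N * (1 + s * b) * (t + \<epsilon>) \<le> real N * (1 + s * b) * (t + 2 * inv_phi_max)"
    using \<epsilon> pos by (intro mult_left_mono) auto
  moreover have "2 \<le> real N * 2" using N_pos by simp
  ultimately show ?thesis
    using window_hi_pred(1)[of t \<epsilon>] t \<epsilon> by (simp add: horizon_def of_nat_diff algebra_simps)
qed

lemma window_lo_ge: "t - \<epsilon> \<le> mean_tau (window_lo t \<epsilon>)"
  unfolding window_lo_def using mean_tau_unbounded[of "t - \<epsilon>"]
  by (metis (mono_tags, lifting) LeastI_ex less_imp_le)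

lemma window_lo_le_hi: "0 \<le> \<epsilon> \<Longrightarrow> window_lo t \<epsilon> \<le> window_hi t \<epsilon>"
  unfolding window_lo_def by (rule Least_le) (use window_hi_gt[of t \<epsilon>] in simp)

lemma window_lo_pred:
  assumes "window_lo t \<epsilon> \<noteq> 0"
  shows "mean_tau (window_lo t \<epsilon>) < t - \<epsilon> + inv_phi_max / real N"
proof -
  have "\<not> t - \<epsilon> \<le> mean_tau (window_lo t \<epsilon> - 1)"
    unfolding window_lo_def by (rule not_less_Least) (use assms in \<open>simp add: window_lo_def\<close>)
  then show ?thesis using mean_tau_Suc_le[of "window_lo t \<epsilon> - 1"] assms by simp
qed

lemma mean_tau_window:
  assumes "0 < t + \<epsilon>" and j: "window_lo t \<epsilon> \<le> j" "j < window_hi t \<epsilon>"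
  shows "\<bar>mean_tau j - t\<bar> \<le> \<epsilon>"
proof -
  have "mean_tau j \<le> mean_tau (window_hi t \<epsilon> - 1)" using j(2) by (intro mean_tau_mono) simp
  then show ?thesis
    using mean_tau_mono[OF j(1)] window_lo_ge[of t \<epsilon>] window_hi_pred(2)[OF assms(1)]
    by (simp add: abs_le_iff)
qed

lemma kappa_in_window:
  assumes nonneg: "\<And>l. 1 \<le> l \<Longrightarrow> 0 \<le> dt l \<omega>" and t: "0 < t" and \<epsilon>: "0 < \<epsilon>"
    and N\<epsilon>: "inv_phi_max / real N \<le> \<epsilon> / 2"
    and lo: "\<bar>tau dt (window_lo t \<epsilon>) \<omega> - mean_tau (window_lo t \<epsilon>)\<bar> < \<epsilon> / 2"
    and hi: "\<bar>tau dt (window_hi t \<epsilon>) \<omega> - mean_tau (window_hi t \<epsilon>)\<bar> < \<epsilon>"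
  shows "window_lo t \<epsilon> \<le> kappa dt t \<omega>" and "kappa dt t \<omega> < window_hi t \<epsilon>"
proof -
  have "tau dt (window_lo t \<epsilon>) \<omega> \<le> t"
  proof (cases "window_lo t \<epsilon> = 0")
    case False
    then show ?thesis using window_lo_pred[OF False] lo N\<epsilon> by linarith
  qed (use t in \<open>simp add: tau_def\<close>)
  moreover have "t < tau dt (window_hi t \<epsilon>) \<omega>" using window_hi_gt[of t \<epsilon>] hi by linarith
  ultimately show "window_lo t \<epsilon> \<le> kappa dt t \<omega>" "kappa dt t \<omega> < window_hi t \<epsilon>"
    using kappa_between[of dt \<omega>, OF nonneg] by auto
qed

lemma bl_dist_eta_window:
  assumes t: "0 < t" and \<epsilon>: "0 < \<epsilon>" "\<epsilon> \<le> 2 * inv_phi_max"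
    and j: "window_lo t \<epsilon> \<le> j" "j < window_hi t \<epsilon>"
  shows "bl_dist (eta j) (\<rho> t) \<le> gronwall_const t / real N + drift_sup * (\<epsilon> + inv_phi_max / real N)"
  unfolding gronwall_const_def using window_hi_le[OF t \<epsilon>] j t \<epsilon> horizon_nonneg[of t]
  by (intro bl_dist_eta_rho_le mean_tau_window) auto

end

section \<open>The random clock\<close>

lemma powr_neg_quarter_bounds:
  assumes N: "1 \<le> (N::nat)"
  defines "w \<equiv> real N powr (-1/4)"
  shows "0 < w" "w \<le> 1" "1 / real N \<le> w" "1 / (real N * w\<^sup>2) \<le> w"
proof -
  have N1: "1 \<le> real N" using N by simp
  show "0 < w" unfolding w_def using N by simp
  have "w \<le> real N powr 0" unfolding w_def using N1 by (intro powr_mono) auto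
  then show "w \<le> 1" using N by simp
  have "1 / real N = real N powr (-1)" using N by (simp add: powr_minus_divide)
  also have "\<dots> \<le> w" unfolding w_def using N1 by (intro powr_mono) auto
  finally show "1 / real N \<le> w" .
  have "w\<^sup>2 = real N powr (-1/2)" unfolding w_def using N by (simp add: powr_power)
  moreover have "real N * real N powr (-1/2) = real N powr (1/2)"
    using powr_mult_base[of "real N" "-1/2"] by simp
  ultimately have "1 / (real N * w\<^sup>2) = real N powr (-1/2)"
    by (simp add: powr_minus_divide)
  also have "\<dots> \<le> w" unfolding w_def using N1 by (intro powr_mono) auto
  finally show "1 / (real N * w\<^sup>2) \<le> w" .
qed

locale jump_times = euler_scheme + P: prob_space M for M :: "'a measure" +
  fixes dtau :: "nat \<Rightarrow> 'a \<Rightarrow> real"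
  assumes indep: "P.indep_vars (\<lambda>_. borel) dtau {1..}"
    and exponential: "\<And>k. 1 \<le> k \<Longrightarrow> distributed M lborel (dtau k) (exponential_density (real N * phi (eta k)))"
begin

lemma rate_pos: "0 < real N * phi (eta k)"
  using N_pos phi_pos[OF is_density_eta] by simp

lemma dtau_measurable: "1 \<le> l \<Longrightarrow> dtau l \<in> borel_measurable M"
  using distributed_measurable[OF exponential] by simp

lemma tau_measurable: "tau dtau k \<in> borel_measurable M"
  unfolding tau_def using dtau_measurable by (intro borel_measurable_sum) auto

lemma tau_minus_mean_tau:
  "tau dtau k \<omega> - mean_tau k = (\<Sum>l\<in>{1..<k}. dtau l \<omega> - 1 / (real N * phi (eta l)))"
  unfolding tau_def mean_tau_def step_def by (simp add: sum_subtractf)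

lemma prob_tau_deviation:
  assumes a: "0 < a"
  shows "P.prob {\<omega> \<in> space M. a \<le> \<bar>tau dtau k \<omega> - mean_tau k\<bar>} \<le> real k * (inv_phi_max / real N)\<^sup>2 / a\<^sup>2"
proof -
  define Y where "Y l \<omega> = dtau l \<omega> - 1 / (real N * phi (eta l))" for l \<omega>
  note moments = P.exponential_centered_moments[OF rate_pos exponential]
  have "P.indep_vars (\<lambda>_. borel) (\<lambda>l \<omega>. (\<lambda>x. x - 1 / (real N * phi (eta l))) (dtau l \<omega>)) {1..<k}"
    by (rule P.indep_vars_compose2[OF P.indep_vars_subset[OF indep]]) auto
  then have "P.prob {\<omega> \<in> space M. a \<le> \<bar>\<Sum>l\<in>{1..<k}. Y l \<omega>\<bar>}
      \<le> (\<Sum>l\<in>{1..<k}. P.expectation (\<lambda>\<omega>. (Y l \<omega>)\<^sup>2)) / a\<^sup>2"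
    unfolding Y_def using moments a by (intro P.Chebyshev_sum_indep) auto
  also have "(\<Sum>l\<in>{1..<k}. P.expectation (\<lambda>\<omega>. (Y l \<omega>)\<^sup>2)) = (\<Sum>l\<in>{1..<k}. (step l)\<^sup>2)"
    unfolding Y_def using moments(4) by (intro sum.cong refl) (simp add: step_def power_one_over)
  also have "\<dots> / a\<^sup>2 \<le> real k * (inv_phi_max / real N)\<^sup>2 / a\<^sup>2"
    by (intro divide_right_mono sum_step_sq_le) auto
  finally show ?thesis unfolding tau_minus_mean_tau Y_def .
qed

lemma AE_dtau_nonneg: "AE \<omega> in M. \<forall>l. 1 \<le> l \<longrightarrow> 0 \<le> dtau l \<omega>"
  unfolding AE_all_countable
proof
  fix l :: nat
  show "AE \<omega> in M. 1 \<le> l \<longrightarrow> 0 \<le> dtau l \<omega>"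
  proof (cases "1 \<le> l")
    case True
    then show ?thesis
      using P.AE_exponential_distributed_pos[OF rate_pos exponential[OF True]]
      by (auto elim!: eventually_mono)
  qed simp
qed

definition clock_off :: "real \<Rightarrow> real \<Rightarrow> 'a set" where
  "clock_off t \<epsilon> = {\<omega> \<in> space M. \<epsilon> / 2 \<le> \<bar>tau dtau (window_lo t \<epsilon>) \<omega> - mean_tau (window_lo t \<epsilon>)\<bar>}
     \<union> {\<omega> \<in> space M. \<epsilon> \<le> \<bar>tau dtau (window_hi t \<epsilon>) \<omega> - mean_tau (window_hi t \<epsilon>)\<bar>}"

lemma tau_deviation_events: "{\<omega> \<in> space M. a \<le> \<bar>tau dtau k \<omega> - mean_tau k\<bar>} \<in> P.events"
  using tau_measurable by measurable

lemma clock_off_events: "clock_off t \<epsilon> \<in> P.events"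
  unfolding clock_off_def by (intro sets.Un tau_deviation_events)

lemma prob_clock_off:
  assumes t: "0 < t" and \<epsilon>: "0 < \<epsilon>" "\<epsilon> \<le> 2 * inv_phi_max"
  shows "P.prob (clock_off t \<epsilon>) \<le> 5 * horizon t * inv_phi_max\<^sup>2 / (real N * \<epsilon>\<^sup>2)"
proof -
  define Q where "Q = real N * horizon t"
  have hi: "real (window_hi t \<epsilon>) \<le> Q" unfolding Q_def by (rule window_hi_le[OF t \<epsilon>])
  have lo: "real (window_lo t \<epsilon>) \<le> Q" using window_lo_le_hi[of \<epsilon> t] \<epsilon> hi by simp
  have N: "0 < real N" using N_pos by simp
  have "P.prob (clock_off t \<epsilon>)
      \<le> real (window_lo t \<epsilon>) * (inv_phi_max / real N)\<^sup>2 / (\<epsilon> / 2)\<^sup>2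
        + real (window_hi t \<epsilon>) * (inv_phi_max / real N)\<^sup>2 / \<epsilon>\<^sup>2"
    unfolding clock_off_def using \<epsilon>
    by (intro measure_Un_le[THEN order_trans] tau_deviation_events add_mono prob_tau_deviation) auto
  also have "\<dots> \<le> Q * (inv_phi_max / real N)\<^sup>2 / (\<epsilon> / 2)\<^sup>2 + Q * (inv_phi_max / real N)\<^sup>2 / \<epsilon>\<^sup>2"
    using lo hi by (intro add_mono divide_right_mono mult_right_mono) auto
  also have "\<dots> = 5 * horizon t * inv_phi_max\<^sup>2 / (real N * \<epsilon>\<^sup>2)"
    unfolding Q_def using N \<epsilon> by (simp add: field_simps power2_eq_square)
  finally show ?thesis .
qed

lemma bl_dist_eta_kappa_off_clock:
  assumes t: "0 < t" and \<epsilon>: "0 < \<epsilon>" "\<epsilon> \<le> 2 * inv_phi_max" "inv_phi_max / real N \<le> \<epsilon> / 2"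
  shows "AE \<omega> in M. \<omega> \<notin> clock_off t \<epsilon> \<longrightarrow>
    bl_dist (eta (kappa dtau t \<omega>)) (\<rho> t) \<le> gronwall_const t / real N + drift_sup * (\<epsilon> + inv_phi_max / real N)"
  using AE_dtau_nonneg AE_space
proof eventually_elim
  case (elim \<omega>)
  show ?case
  proof
    assume "\<omega> \<notin> clock_off t \<epsilon>"
    then have "window_lo t \<epsilon> \<le> kappa dtau t \<omega>" "kappa dtau t \<omega> < window_hi t \<epsilon>"
      using elim by (intro kappa_in_window[OF _ t \<epsilon>(1) \<epsilon>(3)]; force simp: clock_off_def)+
    then show "bl_dist (eta (kappa dtau t \<omega>)) (\<rho> t) \<le> gronwall_const t / real N + drift_sup * (\<epsilon> + inv_phi_max / real N)"
      by (rule bl_dist_eta_window[OF t \<epsilon>(1,2)])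
  qed
qed

lemma expected_bl_dist_le:
  assumes t: "0 < t"
  shows "(\<integral>\<^sup>+\<omega>. ennreal (bl_dist (eta (kappa dtau t \<omega>)) (\<rho> t)) \<partial>M)
    \<le> ennreal (error_const t) * ennreal (real N powr (-1/4))"
proof -
  define w where "w = real N powr (-1/4)"
  have w: "0 < w" "w \<le> 1" "1 / real N \<le> w" "1 / (real N * w\<^sup>2) \<le> w"
    using powr_neg_quarter_bounds[OF N_pos] by (simp_all add: w_def)
  define \<epsilon> where "\<epsilon> = 2 * inv_phi_max * w"
  have H: "inv_phi_max / real N \<le> inv_phi_max * w"
    using mult_left_mono[OF w(3), of inv_phi_max] inv_phi_max_pos by simp
  have \<epsilon>: "0 < \<epsilon>" "\<epsilon> \<le> 2 * inv_phi_max" "inv_phi_max / real N \<le> \<epsilon> / 2"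
    using w inv_phi_max_pos H unfolding \<epsilon>_def by auto
  define A where "A = gronwall_const t + 3 * drift_sup * inv_phi_max"
  have A: "0 \<le> A * w" unfolding A_def
    using gronwall_const_nonneg[of t] t drift_sup_nonneg inv_phi_max_pos w by simp
  have "gronwall_const t / real N + drift_sup * (\<epsilon> + inv_phi_max / real N) \<le> A * w"
    using mult_left_mono[OF w(3) gronwall_const_nonneg[of t]] t H drift_sup_nonneg
      mult_left_mono[OF H drift_sup_nonneg]
    unfolding A_def \<epsilon>_def by (simp add: algebra_simps)
  then have off: "AE \<omega> in M. \<omega> \<notin> clock_off t \<epsilon> \<longrightarrow> bl_dist (eta (kappa dtau t \<omega>)) (\<rho> t) \<le> A * w"
    using bl_dist_eta_kappa_off_clock[OF t \<epsilon>] by (auto elim!: eventually_mono)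
  have bounded: "AE \<omega> in M. bl_dist (eta (kappa dtau t \<omega>)) (\<rho> t) \<le> 2"
    using t by (intro AE_I2 bl_dist_le_2 is_density_eta is_density_rho) simp
  have "P.prob (clock_off t \<epsilon>) \<le> 5 * horizon t * inv_phi_max\<^sup>2 / (real N * \<epsilon>\<^sup>2)"
    by (rule prob_clock_off[OF t \<epsilon>(1,2)])
  also have "\<dots> = 5 / 4 * horizon t * (1 / (real N * w\<^sup>2))"
    unfolding \<epsilon>_def using inv_phi_max_pos by (simp add: field_simps power2_eq_square)
  also have "\<dots> \<le> 5 / 4 * horizon t * w"
    using w(4) horizon_nonneg[of t] t by (intro mult_left_mono) auto
  finally have bad: "P.prob (clock_off t \<epsilon>) \<le> 5 / 4 * horizon t * w" .
  have "(\<integral>\<^sup>+\<omega>. ennreal (bl_dist (eta (kappa dtau t \<omega>)) (\<rho> t)) \<partial>M)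
      \<le> ennreal (A * w + 2 * P.prob (clock_off t \<epsilon>))"
    by (rule P.nn_integral_le_off_event[OF clock_off_events A _ bounded off]) simp
  also have "\<dots> \<le> ennreal (error_const t * w)"
    using bad unfolding error_const_def A_def by (intro ennreal_leI) (simp add: algebra_simps)
  also have "\<dots> = ennreal (error_const t) * ennreal (real N powr (-1/4))"
    using error_const_nonneg[of t] t w unfolding w_def by (intro ennreal_mult) auto
  finally show ?thesis .
qed
end

lemma (in mean_field) expected_bl_dist_bound:
  assumes t: "0 < t" and N: "1 \<le> N" and M: "prob_space M"
    and indep: "prob_space.indep_vars M (\<lambda>_. borel) dtau {1..}"
    and exponential: "\<forall>k\<ge>1. distributed M lborel (dtau k)
      (exponential_density (real N * (1 + s * (b - c) * mean (eta_aux b c s lam R N \<rho>0 k))))"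
  shows "(\<integral>\<^sup>+\<omega>. ennreal (bl_dist (eta_aux b c s lam R N \<rho>0 (kappa dtau t \<omega>)) (\<rho> t)) \<partial>M)
    \<le> ennreal (error_const t) * ennreal (real N powr (-1/4))"
proof -
  have scheme: "euler_scheme b c s lam R LR \<rho>0 \<rho> N"
    by (intro euler_scheme.intro euler_scheme_axioms.intro mean_field_axioms N)
  interpret jump_times b c s lam R LR \<rho>0 \<rho> N M dtau
    by (intro jump_times.intro jump_times_axioms.intro scheme M indep)
      (use exponential in \<open>simp add: phi_def euler_scheme.eta_def[OF scheme]\<close>)
  show ?thesis using expected_bl_dist_le[OF t] by (simp add: eta_def)
qed

theorem lemma7:
  fixes b c s lam :: real and R :: "real \<Rightarrow> real"
    and \<rho>0 :: "real measure" and \<rho> :: "real \<Rightarrow> real measure"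
  assumes "b \<ge> 0" and "c \<ge> 0" and "0 < s" and "s * c < 1"
    and "0 \<le> lam" and "lam \<le> 1/2"
    and "\<forall>x\<in>{0..1}. R x \<in> {0..1}" and "\<exists>L. lipschitz_on L {0..1} R"
    and "is_density \<rho>0"
    and "mean_field_solution b c s lam R \<rho>0 \<rho>"
  shows "\<forall>t>0. \<exists>C<\<infinity>. \<forall>(N::nat) (M::'a measure) (dtau::nat \<Rightarrow> 'a \<Rightarrow> real).
           N \<ge> 1 \<longrightarrow> prob_space M \<longrightarrow>
           prob_space.indep_vars M (\<lambda>_. borel) dtau {1..} \<longrightarrow>
           (\<forall>k\<ge>1. distributed M lborel (dtau k)
              (exponential_density (real N * (1 + s * (b - c) * mean (eta_aux b c s lam R N \<rho>0 k))))) \<longrightarrow>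
           (\<integral>\<^sup>+\<omega>. ennreal (bl_dist (eta_aux b c s lam R N \<rho>0 (kappa dtau t \<omega>)) (\<rho> t)) \<partial>M)
             \<le> C * ennreal (real N powr (-1/4))"
proof -
  obtain LR where "lipschitz_on LR {0..1} R" using assms(8) by blast
  then interpret mean_field b c s lam R LR \<rho>0 \<rho>
    using assms by unfold_locales auto
  show ?thesis
    apply (intro allI impI)
    subgoal for t
      apply (rule exI[of _ "ennreal (error_const t)"], rule conjI)
       apply simp
      apply (intro allI impI)
      apply (rule expected_bl_dist_bound; assumption)
      done
    done
qed

end
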